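(* Let $0\le s<n$ and let $\rho$ be a $1$-contact $(n-s)$-horizontal $(n-s+1)$-form on $W^1\subseteq J^1Y$, with $$p_1\rho=\big(A^{i_1\dots i_s}_\sigma\omega^\sigma+A^{i_1\dots i_sj}_\sigma\omega^\sigma_j\big)\wedge ds_{i_1\dots i_s},$$ coefficients antisymmetric in $i_1\dots i_s$. Let $\mathbb{V}_\rho$ be the variational morphism $\langle\mathbb{V}_\rho|J^1\Xi\rangle=J^1\Xi\lrcorner\,p_1\rho=(A^{i_1\dots i_s}_\sigma\Xi^\sigma+A^{i_1\dots i_sj}_\sigma\Xi^\sigma_j)\,ds_{i_1\dots i_s}$, and let $(\mathbb{E},\mathbb{T})$ be its canonical splitting with respect to the fibered connection whose coefficients vanish on the chart, i.e. the variational morphisms $\mathbb{E}$ of rank $1$ and degree $n-s$, reduced, and $\mathbb{T}$ of rank $0$ and degree $n-s-1$, such that $\langle\mathbb{V}_\rho|J^1\Xi\rangle=\langle\mathbb{E}|J^1\Xi\rangle+\mathrm{Div}(\langle\mathbb{T}|\Xi\rangle)$ for all $\pi$-vertical $\Xi$. Define $\hat t^{i_1\dots i_si}_\sigma=A^{[i_1\dots i_si]}_\sigma$ and the variational morphisms $$\langle\mathbb{T}'|\Xi\rangle=\frac{1}{s+1}\,\hat t^{i_1\dots i_si}_\sigma\Xi^\sigma\,ds_{i_1\dots i_si},$$ $$\langle\mathbb{E}'|J^1\Xi\rangle=\Big[\big(A^{i_1\dots i_s}_\sigma-d_i\hat t^{i_1\dots i_si}_\sigma\big)\Xi^\sigma+\big(A^{i_1\dots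 i_sj}_\sigma-\hat t^{i_1\dots i_sj}_\sigma\big)\Xi^\sigma_j\Big]ds_{i_1\dots i_s}.$$ Then $\langle\mathbb{V}_\rho|J^1\Xi\rangle=\langle\mathbb{E}'|J^1\Xi\rangle+\mathrm{Div}(\langle\mathbb{T}'|\Xi\rangle)$ and the two splittings coincide: $\mathbb{E}'=\mathbb{E}$ and $\mathbb{T}'=\mathbb{T}$.
   Context: Let $\pi:Y\to X$ be a fibered manifold, $n=\dim X$. Let $U\subseteq X$ be open and $W=\pi^{-1}(U)$ the domain of a fibered chart $(x^i,y^\sigma)$ with associated coordinates $(x^i,y^\sigma,y^\sigma_j)$ on $W^1\subseteq J^1Y$ and $(x^i,y^\sigma_J)$ on higher jets; repeated indices are summed over $1,\dots,n$. Square brackets denote antisymmetrization (weight $1/(\text{number of indices})!$). Contact forms $\omega^\sigma=dy^\sigma-y^\sigma_idx^i$, $\omega^\sigma_j=dy^\sigma_j-y^\sigma_{ji}dx^i$. $ds=dx^1\wedge\dots\wedge dx^n$, $ds_{i_1\dots i_p}=\frac{\partial}{\partial x^{i_p}}\lrcorner\dots\lrcorner\frac{\partial}{\partial x^{i_1}}\lrcorner ds$. Formal derivative $d_i=\frac{\partial}{\partial x^i}+\sum_J y^\sigma_{Ji}\frac{\partial}{\partial y^\sigma_J}$. $p_1$ denotes the $1$-contact component (pull back to $J^2Y$, substitute $dy^\sigma_J=\omega^\sigma_J+y^\sigma_{Ji}dx^i$, keep terms with exactly one $\omega$). For a $\pi$-vertical vector field $\Xi=\Xi^\sigma\partial/\partial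 y^\sigma$, $J^1\Xi=\Xi^\sigma\partial/\partial y^\sigma+\Xi^\sigma_j\partial/\partial y^\sigma_j$ with $\Xi^\sigma_j=d_j\Xi^\sigma$. A variational morphism of rank $r$ and degree $n-s$ assigns to each such $\Xi$ the horizontal form $\frac{1}{s!}\big(\sum_{|J|\le r}v^{i_1\dots i_sJ}_\sigma\Xi^\sigma_J\big)ds_{i_1\dots i_s}$ (coefficients antisymmetric in $i_1\dots i_s$, symmetric in $J$); it is reduced (with respect to the fibered connection with vanishing coefficients) if each of its terms of rank $h\ge1$ satisfies $v^{[i_1\dots i_sj_1]j_2\dots j_h}_\sigma=0$. For a horizontal form $\beta=f^{i_1\dots i_p}ds_{i_1\dots i_p}$ depending on $x$, jets of $y$ and of $\Xi$, $\mathrm{Div}(\beta)=d_lf^{i_1\dots i_p}\,dx^l\wedge ds_{i_1\dots i_p}$, with $d_l$ acting also on $\Xi$-variables by $d_l\Xi^\sigma_J=\Xi^\sigma_{Jl}$. For $r=1$ the pair $(\mathbb{E},\mathbb{T})$ described in the claim is uniquely determined by these conditions. *)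

theory Defs
  imports "HOL-Analysis.Analysis" "HOL-Combinatorics.Permutations" "HOL-Library.Multiset"
begin

fun Ck_on :: "nat \<Rightarrow> 'a::real_normed_vector set \<Rightarrow> ('a \<Rightarrow> real) \<Rightarrow> bool" where
  "Ck_on 0 S f = continuous_on S f"
| "Ck_on (Suc k) S f =
     ((\<forall>x\<in>S. f differentiable (at x)) \<and>
      (\<forall>v. Ck_on k S (\<lambda>x. frechet_derivative f (at x) v)))"

definition smooth_fun_on :: "'a::real_normed_vector set \<Rightarrow> ('a \<Rightarrow> real) \<Rightarrow> bool" where
  "smooth_fun_on S f \<longleftrightarrow> (\<forall>k. Ck_on k S f)"

text \<open>Base indices are the elements of a finite linearly ordered type 'n (n = CARD('n)),
  fibre indices the elements of a finite type 'm.  A point of the (infinite) jet prolongation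
  of the chart domain is a pair (x, u) with x the base coordinates and u J the fibre
  coordinates y_J (J a multiset of base indices, i.e. a symmetric multi-index; u {#} = y).\<close>

type_synonym ('n, 'm) jpt = "(real^'n) \<times> ('n multiset \<Rightarrow> real^'m)"

definition jdom :: "((real^'n::{finite,linorder}) \<times> (real^'m::finite)) set \<Rightarrow> ('n::{finite,linorder},'m::finite) jpt set" where
  "jdom W = {P. (fst P, snd P {#}) \<in> W}"

text \<open>First jet domain W^1, as a subset of R^n x R^m x R^(m n) (p $ sigma $ j = y^sigma_j).\<close>
definition j1dom :: "((real^'n::{finite,linorder}) \<times> (real^'m::finite)) set \<Rightarrow> ((real^'n::{finite,linorder}) \<times> (real^'m::finite) \<times> (real^'n::{finite,linorder}^'m::finite)) set" where
  "j1dom W = {(x, y, p). (x, y) \<in> W}"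

definition j1proj :: "('n::{finite,linorder},'m::finite) jpt \<Rightarrow> (real^'n::{finite,linorder}) \<times> (real^'m::finite) \<times> (real^'n::{finite,linorder}^'m::finite)" where
  "j1proj P = (fst P, snd P {#}, \<chi> \<sigma> j. snd P {#j#} $ \<sigma>)"

definition has_order :: "nat \<Rightarrow> (('n::{finite,linorder},'m::finite) jpt \<Rightarrow> real) \<Rightarrow> bool" where
  "has_order k F \<longleftrightarrow> (\<forall>P Q. fst P = fst Q \<and> (\<forall>J. size J \<le> k \<longrightarrow> snd P J = snd Q J)
                        \<longrightarrow> F P = F Q)"

definition ford :: "(('n::{finite,linorder},'m::finite) jpt \<Rightarrow> real) \<Rightarrow> nat" where
  "ford F = (LEAST k. has_order k F)"

definition upd_x :: "'n::{finite,linorder} \<Rightarrow> real \<Rightarrow> ('n::{finite,linorder},'m::finite) jpt \<Rightarrow> ('n::{finite,linorder},'m::finite) jpt" where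
  "upd_x i t P = ((\<chi> j. if j = i then t else fst P $ j), snd P)"

definition upd_y :: "'m::finite \<Rightarrow> 'n::{finite,linorder} multiset \<Rightarrow> real \<Rightarrow> ('n::{finite,linorder},'m::finite) jpt \<Rightarrow> ('n::{finite,linorder},'m::finite) jpt" where
  "upd_y \<sigma> J t P = (fst P, (snd P)(J := (\<chi> \<nu>. if \<nu> = \<sigma> then t else snd P J $ \<nu>)))"

definition pdx :: "'n::{finite,linorder} \<Rightarrow> (('n::{finite,linorder},'m::finite) jpt \<Rightarrow> real) \<Rightarrow> ('n::{finite,linorder},'m::finite) jpt \<Rightarrow> real" where
  "pdx i F P = deriv (\<lambda>t. F (upd_x i t P)) (fst P $ i)"

definition pdy :: "'m::finite \<Rightarrow> 'n::{finite,linorder} multiset \<Rightarrow> (('n::{finite,linorder},'m::finite) jpt \<Rightarrow> real) \<Rightarrow> ('n::{finite,linorder},'m::finite) jpt \<Rightarrow> real" where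
  "pdy \<sigma> J F P = deriv (\<lambda>t. F (upd_y \<sigma> J t P)) (snd P J $ \<sigma>)"

definition pdiff_on :: "('n::{finite,linorder},'m::finite) jpt set \<Rightarrow> (('n::{finite,linorder},'m::finite) jpt \<Rightarrow> real) \<Rightarrow> bool" where
  "pdiff_on S F \<longleftrightarrow> (\<forall>P\<in>S.
      (\<forall>i. (\<lambda>t. F (upd_x i t P)) differentiable (at (fst P $ i))) \<and>
      (\<forall>\<sigma> J. (\<lambda>t. F (upd_y \<sigma> J t P)) differentiable (at (snd P J $ \<sigma>))))"

definition fd :: "'n::{finite,linorder} \<Rightarrow> (('n::{finite,linorder},'m::finite) jpt \<Rightarrow> real) \<Rightarrow> ('n::{finite,linorder},'m::finite) jpt \<Rightarrow> real" where
  "fd i F P = pdx i F P +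
     (\<Sum>J\<in>{J::'n::{finite,linorder} multiset. size J \<le> ford F}. \<Sum>\<sigma>\<in>UNIV. snd P (J + {#i#}) $ \<sigma> * pdy \<sigma> J F P)"

text \<open>A horizontal form at a point is given by its components on lists of coordinate
  vectors d/dx^(j_1), ..., d/dx^(j_k) (a function 'n list => real).\<close>

definition inversions :: "'a::linorder list \<Rightarrow> nat" where
  "inversions js = card {(a, b). a < b \<and> b < length js \<and> js ! b < js ! a}"

text \<open>Components of ds = dx^1 /\ ... /\ dx^n.\<close>
definition ds_form :: "'n::{finite,linorder} list \<Rightarrow> real" where
  "ds_form js = (if distinct js \<and> length js = CARD('n) then (-1) ^ inversions js else 0)"

text \<open>ds_(i_1...i_p) = d/dx^(i_p) _| ... d/dx^(i_1) _| ds (interior product in the first slot).\<close>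
definition ds_idx :: "'n::{finite,linorder} list \<Rightarrow> 'n::{finite,linorder} list \<Rightarrow> real" where
  "ds_idx is js = ds_form (is @ js)"

definition wedge_dx :: "'n::{finite,linorder} \<Rightarrow> ('n::{finite,linorder} list \<Rightarrow> real) \<Rightarrow> 'n::{finite,linorder} list \<Rightarrow> real" where
  "wedge_dx l \<beta> js = (\<Sum>a<length js. (-1) ^ a * (if js ! a = l then \<beta> (take a js @ drop (Suc a) js) else 0))"

text \<open>Horizontal form f^(i_1...i_p) ds_(i_1...i_p) (summation over all index lists).\<close>
definition hform :: "nat \<Rightarrow> ('n::{finite,linorder} list \<Rightarrow> ('n::{finite,linorder},'m::finite) jpt \<Rightarrow> real) \<Rightarrow> ('n::{finite,linorder},'m::finite) jpt \<Rightarrow> 'n::{finite,linorder} list \<Rightarrow> real" where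
  "hform p f P js = (\<Sum>I\<in>{I::'n::{finite,linorder} list. length I = p}. f I P * ds_idx I js)"

definition Div :: "nat \<Rightarrow> ('n::{finite,linorder} list \<Rightarrow> ('n::{finite,linorder},'m::finite) jpt \<Rightarrow> real) \<Rightarrow> ('n::{finite,linorder},'m::finite) jpt \<Rightarrow> 'n::{finite,linorder} list \<Rightarrow> real" where
  "Div p f P js = (\<Sum>I\<in>{I::'n::{finite,linorder} list. length I = p}. \<Sum>l\<in>UNIV. fd l (f I) P * wedge_dx l (ds_idx I) js)"

definition antisym_idx :: "nat \<Rightarrow> ('a list \<Rightarrow> real) \<Rightarrow> bool" where
  "antisym_idx p c \<longleftrightarrow> (\<forall>is a b. length is = p \<and> a < b \<and> b < p \<longrightarrow> c (is[a := is ! b, b := is ! a]) = - c is)"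

definition alt :: "('a list \<Rightarrow> real) \<Rightarrow> 'a list \<Rightarrow> real" where
  "alt c ks = (1 / fact (length ks)) *
     (\<Sum>\<pi>\<in>{\<pi>. \<pi> permutes {..<length ks}}. of_int (sign \<pi>) * c (map (\<lambda>k. ks ! \<pi> k) [0..<length ks]))"

definition Xi0 :: "((real^'n::{finite,linorder}) \<times> (real^'m::finite) \<Rightarrow> real^'m::finite) \<Rightarrow> 'm::finite \<Rightarrow> ('n::{finite,linorder},'m::finite) jpt \<Rightarrow> real" where
  "Xi0 Xi \<sigma> P = Xi (fst P, snd P {#}) $ \<sigma>"

definition Xi1 :: "((real^'n::{finite,linorder}) \<times> (real^'m::finite) \<Rightarrow> real^'m::finite) \<Rightarrow> 'm::finite \<Rightarrow> 'n::{finite,linorder} \<Rightarrow> ('n::{finite,linorder},'m::finite) jpt \<Rightarrow> real" where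
  "Xi1 Xi \<sigma> j P = fd j (Xi0 Xi \<sigma>) P"

definition vert_field :: "((real^'n::{finite,linorder}) \<times> (real^'m::finite)) set \<Rightarrow> ((real^'n::{finite,linorder}) \<times> (real^'m::finite) \<Rightarrow> real^'m::finite) \<Rightarrow> bool" where
  "vert_field W Xi \<longleftrightarrow> (\<forall>\<sigma>. smooth_fun_on W (\<lambda>z. Xi z $ \<sigma>))"

definition vm1 :: "nat \<Rightarrow> ('n::{finite,linorder} list \<Rightarrow> 'm::finite \<Rightarrow> ('n::{finite,linorder},'m::finite) jpt \<Rightarrow> real)
     \<Rightarrow> ('n::{finite,linorder} list \<Rightarrow> 'n::{finite,linorder} \<Rightarrow> 'm::finite \<Rightarrow> ('n::{finite,linorder},'m::finite) jpt \<Rightarrow> real)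
     \<Rightarrow> ((real^'n::{finite,linorder}) \<times> (real^'m::finite) \<Rightarrow> real^'m::finite) \<Rightarrow> ('n::{finite,linorder},'m::finite) jpt \<Rightarrow> 'n::{finite,linorder} list \<Rightarrow> real" where
  "vm1 s v0 v1 Xi = hform s (\<lambda>I P. (1 / fact s) *
      ((\<Sum>\<sigma>\<in>UNIV. v0 I \<sigma> P * Xi0 Xi \<sigma> P) + (\<Sum>\<sigma>\<in>UNIV. \<Sum>j\<in>UNIV. v1 I j \<sigma> P * Xi1 Xi \<sigma> j P)))"

definition vm0_coeff :: "nat \<Rightarrow> ('n::{finite,linorder} list \<Rightarrow> 'm::finite \<Rightarrow> ('n::{finite,linorder},'m::finite) jpt \<Rightarrow> real)
     \<Rightarrow> ((real^'n::{finite,linorder}) \<times> (real^'m::finite) \<Rightarrow> real^'m::finite) \<Rightarrow> 'n::{finite,linorder} list \<Rightarrow> ('n::{finite,linorder},'m::finite) jpt \<Rightarrow> real" where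
  "vm0_coeff s1 t Xi = (\<lambda>I P. (1 / fact s1) * (\<Sum>\<sigma>\<in>UNIV. t I \<sigma> P * Xi0 Xi \<sigma> P))"

definition vm0 :: "nat \<Rightarrow> ('n::{finite,linorder} list \<Rightarrow> 'm::finite \<Rightarrow> ('n::{finite,linorder},'m::finite) jpt \<Rightarrow> real)
     \<Rightarrow> ((real^'n::{finite,linorder}) \<times> (real^'m::finite) \<Rightarrow> real^'m::finite) \<Rightarrow> ('n::{finite,linorder},'m::finite) jpt \<Rightarrow> 'n::{finite,linorder} list \<Rightarrow> real" where
  "vm0 s1 t Xi = hform s1 (vm0_coeff s1 t Xi)"

definition reduced1 :: "('n::{finite,linorder},'m::finite) jpt set \<Rightarrow> nat \<Rightarrow> ('n::{finite,linorder} list \<Rightarrow> 'n::{finite,linorder} \<Rightarrow> 'm::finite \<Rightarrow> ('n::{finite,linorder},'m::finite) jpt \<Rightarrow> real) \<Rightarrow> bool" where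
  "reduced1 S s v1 \<longleftrightarrow> (\<forall>I j \<sigma>. \<forall>P\<in>S. length I = s \<longrightarrow>
       alt (\<lambda>ks. v1 (butlast ks) (last ks) \<sigma> P) (I @ [j]) = 0)"

definition liftA :: "((real^'n::{finite,linorder}) \<times> (real^'m::finite) \<times> (real^'n::{finite,linorder}^'m::finite) \<Rightarrow> real) \<Rightarrow> ('n::{finite,linorder},'m::finite) jpt \<Rightarrow> real" where
  "liftA f P = f (j1proj P)"

definition that :: "('n::{finite,linorder} list \<Rightarrow> 'n::{finite,linorder} \<Rightarrow> 'm::finite \<Rightarrow> (real^'n::{finite,linorder}) \<times> (real^'m::finite) \<times> (real^'n::{finite,linorder}^'m::finite) \<Rightarrow> real)
     \<Rightarrow> 'n::{finite,linorder} list \<Rightarrow> 'm::finite \<Rightarrow> ('n::{finite,linorder},'m::finite) jpt \<Rightarrow> real" where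
  "that A1 ks \<sigma> P = alt (\<lambda>ls. liftA (A1 (butlast ls) (last ls) \<sigma>) P) ks"

definition Vrho :: "nat \<Rightarrow> ('n::{finite,linorder} list \<Rightarrow> 'm::finite \<Rightarrow> (real^'n::{finite,linorder}) \<times> (real^'m::finite) \<times> (real^'n::{finite,linorder}^'m::finite) \<Rightarrow> real)
     \<Rightarrow> ('n::{finite,linorder} list \<Rightarrow> 'n::{finite,linorder} \<Rightarrow> 'm::finite \<Rightarrow> (real^'n::{finite,linorder}) \<times> (real^'m::finite) \<times> (real^'n::{finite,linorder}^'m::finite) \<Rightarrow> real)
     \<Rightarrow> ((real^'n::{finite,linorder}) \<times> (real^'m::finite) \<Rightarrow> real^'m::finite) \<Rightarrow> ('n::{finite,linorder},'m::finite) jpt \<Rightarrow> 'n::{finite,linorder} list \<Rightarrow> real" where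
  "Vrho s A0 A1 Xi = hform s (\<lambda>I P.
      (\<Sum>\<sigma>\<in>UNIV. liftA (A0 I \<sigma>) P * Xi0 Xi \<sigma> P) +
      (\<Sum>\<sigma>\<in>UNIV. \<Sum>j\<in>UNIV. liftA (A1 I j \<sigma>) P * Xi1 Xi \<sigma> j P))"

definition Tprime_coeff :: "nat \<Rightarrow> ('n::{finite,linorder} list \<Rightarrow> 'n::{finite,linorder} \<Rightarrow> 'm::finite \<Rightarrow> (real^'n::{finite,linorder}) \<times> (real^'m::finite) \<times> (real^'n::{finite,linorder}^'m::finite) \<Rightarrow> real)
     \<Rightarrow> ((real^'n::{finite,linorder}) \<times> (real^'m::finite) \<Rightarrow> real^'m::finite) \<Rightarrow> 'n::{finite,linorder} list \<Rightarrow> ('n::{finite,linorder},'m::finite) jpt \<Rightarrow> real" where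
  "Tprime_coeff s A1 Xi = (\<lambda>K P. (1 / (of_nat s + 1)) * (\<Sum>\<sigma>\<in>UNIV. that A1 K \<sigma> P * Xi0 Xi \<sigma> P))"

definition Tprime :: "nat \<Rightarrow> ('n::{finite,linorder} list \<Rightarrow> 'n::{finite,linorder} \<Rightarrow> 'm::finite \<Rightarrow> (real^'n::{finite,linorder}) \<times> (real^'m::finite) \<times> (real^'n::{finite,linorder}^'m::finite) \<Rightarrow> real)
     \<Rightarrow> ((real^'n::{finite,linorder}) \<times> (real^'m::finite) \<Rightarrow> real^'m::finite) \<Rightarrow> ('n::{finite,linorder},'m::finite) jpt \<Rightarrow> 'n::{finite,linorder} list \<Rightarrow> real" where
  "Tprime s A1 Xi = hform (Suc s) (Tprime_coeff s A1 Xi)"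

definition Eprime :: "nat \<Rightarrow> ('n::{finite,linorder} list \<Rightarrow> 'm::finite \<Rightarrow> (real^'n::{finite,linorder}) \<times> (real^'m::finite) \<times> (real^'n::{finite,linorder}^'m::finite) \<Rightarrow> real)
     \<Rightarrow> ('n::{finite,linorder} list \<Rightarrow> 'n::{finite,linorder} \<Rightarrow> 'm::finite \<Rightarrow> (real^'n::{finite,linorder}) \<times> (real^'m::finite) \<times> (real^'n::{finite,linorder}^'m::finite) \<Rightarrow> real)
     \<Rightarrow> ((real^'n::{finite,linorder}) \<times> (real^'m::finite) \<Rightarrow> real^'m::finite) \<Rightarrow> ('n::{finite,linorder},'m::finite) jpt \<Rightarrow> 'n::{finite,linorder} list \<Rightarrow> real" where
  "Eprime s A0 A1 Xi = hform s (\<lambda>I P.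
      (\<Sum>\<sigma>\<in>UNIV. (liftA (A0 I \<sigma>) P - (\<Sum>i\<in>UNIV. fd i (that A1 (I @ [i]) \<sigma>) P)) * Xi0 Xi \<sigma> P) +
      (\<Sum>\<sigma>\<in>UNIV. \<Sum>j\<in>UNIV. (liftA (A1 I j \<sigma>) P - that A1 (I @ [j]) \<sigma> P) * Xi1 Xi \<sigma> j P))"

end

(* Existence is the Leibniz rule.  With Xi_j = d_j Xi, the term hat_t^(I j) Xi_j of V_rho equals
   d_j (hat_t^(I j) Xi) - (d_j hat_t^(I j)) Xi; the second part is moved into E', the first is
   Div T', because dx^j /\ ds_(I j) = ds_I turns the divergence of an (n-s-1)-form with
   antisymmetric coefficients back into an (n-s)-form.  E' is reduced since hat_t is the full
   antisymmetrization of A^(I j).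

   For uniqueness, evaluate a splitting (E, T) on Xi = (x^j0 - x^j0(P)) d/dy^sigma0: at P
   the field vanishes and its prolongation is a Kronecker delta, and the forms ds_I are
   linearly independent, so A^(I j0)_sigma0 = (e^(I j0)_sigma0 + t^(I j0)_sigma0) / s!.
   Antisymmetrizing over all s + 1 indices kills the reduced e and leaves t = s! hat_t,
   i.e. T = T'; then Div T = Div T' and hence E = E'. *)

theory Submission
  imports Defs
begin

section \<open>Alternating functions of index lists\<close>

definition swap_adj :: "'a list \<Rightarrow> nat \<Rightarrow> 'a list" where
  "swap_adj L i = L[i := L ! Suc i, Suc i := L ! i]"

definition alternating :: "('a list \<Rightarrow> real) \<Rightarrow> bool" where
  "alternating F \<longleftrightarrow> (\<forall>L i. Suc i < length L \<longrightarrow> F (swap_adj L i) = - F L)"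

definition swap_invariant :: "('a list \<Rightarrow> real) \<Rightarrow> bool" where
  "swap_invariant F \<longleftrightarrow> (\<forall>L i. Suc i < length L \<longrightarrow> F (swap_adj L i) = F L)"

lemma length_swap_adj [simp]: "length (swap_adj L i) = length L"
  by (simp add: swap_adj_def)

lemma swap_adj_middle: "swap_adj (xs @ x # y # zs) (length xs) = xs @ y # x # zs"
  by (simp add: swap_adj_def list_update_append nth_append)

lemma swap_adj_append: "Suc i < length K \<Longrightarrow> swap_adj (K @ R) i = swap_adj K i @ R"
  by (simp add: swap_adj_def list_update_append nth_append)

lemma swap_adj_prepend: "swap_adj (K @ L) (length K + i) = K @ swap_adj L i"
  by (simp add: swap_adj_def list_update_append nth_append)

lemma alternatingD: "alternating F \<Longrightarrow> Suc i < length L \<Longrightarrow> F (swap_adj L i) = - F L"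
  unfolding alternating_def by blast

lemma alternating_append: "alternating F \<Longrightarrow> alternating (\<lambda>K. F (K @ R))"
  unfolding alternating_def
proof (intro allI impI)
  fix L :: "'a list" and i
  assume "\<forall>L i. Suc i < length L \<longrightarrow> F (swap_adj L i) = - F L" "Suc i < length L"
  then show "F (swap_adj L i @ R) = - F (L @ R)"
    by (metis swap_adj_append length_append trans_less_add1)
qed

lemma alternating_prepend: "alternating F \<Longrightarrow> alternating (\<lambda>L. F (K @ L))"
  unfolding alternating_def
proof (intro allI impI)
  fix L :: "'a list" and i
  assume "\<forall>L i. Suc i < length L \<longrightarrow> F (swap_adj L i) = - F L" "Suc i < length L"
  then show "F (K @ swap_adj L i) = - F (K @ L)"
    by (metis swap_adj_prepend length_append add_Suc_right nat_add_left_cancel_less)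
qed

lemma alternating_move:
  assumes "alternating F"
  shows "F (xs @ x # ys @ zs) = (-1) ^ length ys * F (xs @ ys @ x # zs)"
proof (induction ys arbitrary: xs)
  case (Cons y ys)
  have "F (xs @ x # y # ys @ zs) = - F (swap_adj (xs @ x # y # ys @ zs) (length xs))"
    using alternatingD[OF assms, of "length xs" "xs @ x # y # ys @ zs"] by simp
  also have "swap_adj (xs @ x # y # ys @ zs) (length xs) = (xs @ [y]) @ x # ys @ zs"
    by (simp add: swap_adj_middle)
  finally show ?case using Cons.IH[of "xs @ [y]"] by simp
qed simp

lemma alternating_not_distinct:
  assumes F: "alternating F" and "\<not> distinct L"
  shows "F L = 0"
proof -
  obtain xs ys zs y where L: "L = xs @ [y] @ ys @ [y] @ zs"
    using not_distinct_decomp[OF \<open>\<not> distinct L\<close>] by blast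
  let ?M = "(xs @ ys) @ y # y # zs"
  have "F ?M = - F ?M"
    using alternatingD[OF F, of "length (xs @ ys)" ?M] by (simp only: swap_adj_middle) simp
  then show ?thesis
    using alternating_move[OF F, of xs y ys "y # zs"] L by simp
qed

lemma alternating_antisym_idx:
  "antisym_idx p g \<Longrightarrow> alternating (\<lambda>L. if length L = p then g L else 0)"
  unfolding alternating_def antisym_idx_def swap_adj_def by auto

lemma antisym_idx_not_distinct: "antisym_idx p g \<Longrightarrow> length L = p \<Longrightarrow> \<not> distinct L \<Longrightarrow> g L = 0"
  using alternating_not_distinct[OF alternating_antisym_idx] by fastforce

lemma swap_invariant_mult: "alternating F \<Longrightarrow> alternating G \<Longrightarrow> swap_invariant (\<lambda>L. F L * G L)"
  unfolding alternating_def swap_invariant_def by simp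

lemma swap_invariant_Cons: "swap_invariant h \<Longrightarrow> swap_invariant (\<lambda>zs. h (y # zs))"
  unfolding swap_invariant_def
proof (intro allI impI)
  fix L :: "'a list" and i
  assume "\<forall>L i. Suc i < length L \<longrightarrow> h (swap_adj L i) = h L" "Suc i < length L"
  moreover have "swap_adj (y # L) (Suc i) = y # swap_adj L i"
    by (simp add: swap_adj_def)
  ultimately show "h (y # swap_adj L i) = h (y # L)"
    by (metis Suc_less_eq length_Cons)
qed

lemma swap_invariant_insort: "swap_invariant h \<Longrightarrow> h (x # ys) = h (insort x ys)"
proof (induction ys arbitrary: h)
  case (Cons y ys)
  show ?case
  proof (cases "x \<le> y")
    case False
    have "h (x # y # ys) = h (y # x # ys)"
    proof -
      have "swap_adj (x # y # ys) 0 = y # x # ys"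
        by (simp add: swap_adj_def)
      then show ?thesis
        using Cons.prems unfolding swap_invariant_def by (metis length_Cons zero_less_Suc Suc_less_eq)
    qed
    also have "\<dots> = h (y # insort x ys)"
      using Cons.IH[OF swap_invariant_Cons[OF Cons.prems]] by simp
    finally show ?thesis using False by simp
  qed simp
qed simp

lemma swap_invariant_sort: "swap_invariant h \<Longrightarrow> h L = h (sort L)"
proof (induction L arbitrary: h)
  case (Cons x xs)
  then show ?case
    using Cons.IH[OF swap_invariant_Cons[OF Cons.prems]] swap_invariant_insort[OF Cons.prems] by simp
qed simp

lemma swap_invariant_mset:
  "swap_invariant (h :: 'a::linorder list \<Rightarrow> real) \<Longrightarrow> mset K = mset K' \<Longrightarrow> h K = h K'"
proof -
  assume "swap_invariant h" "mset K = mset K'"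
  moreover have "sort K' = sort K"
    by (rule properties_for_sort) (simp_all add: \<open>mset K = mset K'\<close>)
  ultimately show ?thesis
    using swap_invariant_sort[of h K] swap_invariant_sort[of h K'] by simp
qed

section \<open>The volume form and its contractions\<close>

definition inversion_pairs :: "'a::linorder list \<Rightarrow> (nat \<times> nat) set" where
  "inversion_pairs js = {(a, b). a < b \<and> b < length js \<and> js ! b < js ! a}"

lemma inversions_eq_card: "inversions js = card (inversion_pairs js)"
  by (simp add: inversions_def inversion_pairs_def)

lemma finite_inversion_pairs: "finite (inversion_pairs js)"
  by (rule finite_subset[of _ "{..<length js} \<times> {..<length js}"]) (auto simp: inversion_pairs_def)

lemma inversion_pairs_transpose_subset:
  assumes "Suc i < length L" "length L' = length L"
    and L': "\<And>k. k < length L \<Longrightarrow> L' ! k = L ! Transposition.transpose i (Suc i) k"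
  shows "map_prod (Transposition.transpose i (Suc i)) (Transposition.transpose i (Suc i)) ` (inversion_pairs L - {(i, Suc i)})
    \<subseteq> inversion_pairs L' - {(i, Suc i)}"
proof (rule image_subsetI)
  let ?t = "Transposition.transpose i (Suc i)"
  fix p assume "p \<in> inversion_pairs L - {(i, Suc i)}"
  then obtain a b where p: "p = (a, b)" "a < b" "b < length L" "L ! b < L ! a" "(a, b) \<noteq> (i, Suc i)"
    by (cases p) (auto simp: inversion_pairs_def)
  have "?t a < ?t b" "?t a < length L" "?t b < length L" "(?t a, ?t b) \<noteq> (i, Suc i)"
    using p assms(1) by (auto simp: Transposition.transpose_def split: if_splits)
  moreover have "L' ! ?t a = L ! a" "L' ! ?t b = L ! b"
    using L' \<open>?t a < length L\<close> \<open>?t b < length L\<close> by simp_all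
  ultimately show "map_prod ?t ?t p \<in> inversion_pairs L' - {(i, Suc i)}"
    using p assms(2) by (simp add: inversion_pairs_def)
qed

text \<open>An adjacent swap of distinct entries toggles exactly the inversion at the swapped
  positions; the remaining inversions correspond bijectively under the transposition.\<close>
lemma card_inversion_pairs_swap_adj:
  assumes i: "Suc i < length L"
  shows "card (inversion_pairs (swap_adj L i) - {(i, Suc i)}) = card (inversion_pairs L - {(i, Suc i)})"
proof -
  let ?t = "Transposition.transpose i (Suc i)"
  let ?L' = "swap_adj L i"
  have L': "?L' ! k = L ! ?t k" if "k < length L" for k
    using that i by (auto simp: swap_adj_def nth_list_update Transposition.transpose_def)
  have L: "L ! k = ?L' ! ?t k" if "k < length L" for k
    using L'[of "?t k"] that i by (simp add: Transposition.transpose_def)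
  have "map_prod ?t ?t ` (inversion_pairs L - {(i, Suc i)}) = inversion_pairs ?L' - {(i, Suc i)}"
  proof
    show "map_prod ?t ?t ` (inversion_pairs L - {(i, Suc i)}) \<subseteq> inversion_pairs ?L' - {(i, Suc i)}"
      by (rule inversion_pairs_transpose_subset) (use i L' in auto)
    have "map_prod ?t ?t ` (inversion_pairs ?L' - {(i, Suc i)}) \<subseteq> inversion_pairs L - {(i, Suc i)}"
      by (rule inversion_pairs_transpose_subset) (use i L in auto)
    then show "inversion_pairs ?L' - {(i, Suc i)} \<subseteq> map_prod ?t ?t ` (inversion_pairs L - {(i, Suc i)})"
      by (force simp: image_image map_prod_def split_def)
  qed
  moreover have "inj (map_prod ?t ?t)"
    by (simp add: prod.inj_map inj_transpose)
  ultimately show ?thesis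
    by (metis card_image inj_on_subset subset_UNIV)
qed

lemma ds_form_swap_adj:
  fixes L :: "'n::{finite,linorder} list"
  assumes i: "Suc i < length L"
  shows "ds_form (swap_adj L i) = - ds_form L"
proof (cases "L ! i = L ! Suc i")
  case True
  then have "swap_adj L i = L" and "\<not> distinct L"
    using i by (metis list_update_id swap_adj_def, metis Suc_lessD distinct_conv_nth n_not_Suc_n)
  then show ?thesis by (simp add: ds_form_def)
next
  case False
  let ?L' = "swap_adj L i"
  have dist: "distinct ?L' = distinct L"
    using i by (simp add: swap_adj_def distinct_swap)
  have card_split: "card X = card (X - {x}) + (if x \<in> X then 1 else 0)" if "finite X" for X :: "(nat \<times> nat) set" and x
    using that card_Suc_Diff1[of X x] by auto
  have "(i, Suc i) \<in> inversion_pairs L \<longleftrightarrow> L ! Suc i < L ! i"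
    "(i, Suc i) \<in> inversion_pairs ?L' \<longleftrightarrow> L ! i < L ! Suc i"
    using i by (auto simp: inversion_pairs_def swap_adj_def nth_list_update)
  then have "card (inversion_pairs L) = Suc (card (inversion_pairs ?L'))
      \<or> card (inversion_pairs ?L') = Suc (card (inversion_pairs L))"
    using card_split[OF finite_inversion_pairs, of L "(i, Suc i)"]
      card_split[OF finite_inversion_pairs, of ?L' "(i, Suc i)"]
      card_inversion_pairs_swap_adj[OF i] False
    by (cases "L ! Suc i < L ! i") auto
  then have "(-1::real) ^ card (inversion_pairs ?L') = - ((-1) ^ card (inversion_pairs L))"
    by auto
  then show ?thesis
    using dist by (simp add: ds_form_def inversions_eq_card)
qed

lemma alternating_ds_form: "alternating (ds_form :: 'n::{finite,linorder} list \<Rightarrow> real)"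
  using ds_form_swap_adj unfolding alternating_def by blast

lemma ds_form_nonzero_iff: "ds_form (L :: 'n::{finite,linorder} list) \<noteq> 0 \<longleftrightarrow> distinct L \<and> length L = CARD('n)"
  by (simp add: ds_form_def)

lemma set_eq_UNIV_if_distinct: "distinct (L :: 'n::finite list) \<Longrightarrow> length L = CARD('n) \<Longrightarrow> set L = UNIV"
  by (metis card_subset_eq distinct_card finite_class.finite_UNIV subset_UNIV)

lemma finite_lists_of_length: "finite {I :: 'a::finite list. length I = s}"
  using finite_lists_length_eq[of "UNIV :: 'a set" s] by simp

lemma sum_swap_invariant_concentrated:
  fixes I :: "'a::{finite,linorder} list"
  assumes h: "swap_invariant h" and I: "length I = s"
    and supp: "\<And>I'. length I' = s \<Longrightarrow> h I' \<noteq> 0 \<Longrightarrow> mset I' = mset I"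
  shows "(\<Sum>I' | length I' = s. h I') = of_nat (card {I'. length I' = s \<and> mset I' = mset I}) * h I"
proof -
  let ?S = "{I'. length I' = s \<and> mset I' = mset I}"
  have "(\<Sum>I' | length I' = s. h I') = (\<Sum>I'\<in>?S. h I')"
    using supp by (intro sum.mono_neutral_right finite_lists_of_length) auto
  also have "\<dots> = (\<Sum>I'\<in>?S. h I)"
    by (rule sum.cong[OF refl], rule swap_invariant_mset[OF h]) simp
  finally show ?thesis
    by simp
qed

text \<open>The forms ds_I, I increasing, are linearly independent: pair with the complementary
  index list R, so that only the permutations of I survive.\<close>
lemma ds_idx_linear_independent:
  fixes f :: "'n::{finite,linorder} list \<Rightarrow> real"
  assumes anti: "antisym_idx s f" and s: "s \<le> CARD('n)"
    and zero: "\<And>js. (\<Sum>I | length I = s. f I * ds_idx I js) = 0" and I: "length I = s"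
  shows "f I = 0"
proof (cases "distinct I")
  case False
  then show ?thesis using antisym_idx_not_distinct[OF anti I] by simp
next
  case dI: True
  define R where "R = sorted_list_of_set (UNIV - set I)"
  have dR: "distinct R" and sR: "set R = UNIV - set I"
    by (simp_all add: R_def)
  have "length R = CARD('n) - s"
    using distinct_card[OF dR] sR dI I by (simp add: card_Diff_subset distinct_card)
  then have "ds_form (I @ R) \<noteq> 0"
    using dI dR sR I s by (simp add: ds_form_nonzero_iff)
  define h where "h = (\<lambda>L. (if length L = s then f L else 0) * ds_form (L @ R))"
  have "(\<Sum>I' | length I' = s. h I') = of_nat (card {I'. length I' = s \<and> mset I' = mset I}) * h I"
  proof (rule sum_swap_invariant_concentrated[OF _ I])
    show "swap_invariant h"
      unfolding h_def
      by (rule swap_invariant_mult[OF alternating_antisym_idx[OF anti] alternating_append[OF alternating_ds_form]])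
    fix I' assume "length I' = s" "h I' \<noteq> 0"
    then have "distinct (I' @ R)" "length (I' @ R) = CARD('n)"
      by (auto simp: h_def ds_form_nonzero_iff)
    then have "set I' = set I"
      using set_eq_UNIV_if_distinct[of "I' @ R"] sR by auto
    then show "mset I' = mset I"
      using dI \<open>distinct (I' @ R)\<close> by (simp add: set_eq_iff_mset_eq_distinct)
  qed
  moreover have "(\<Sum>I' | length I' = s. h I') = 0"
    unfolding zero[of R, symmetric] by (rule sum.cong) (auto simp: h_def ds_idx_def)
  moreover have "card {I'. length I' = s \<and> mset I' = mset I} \<noteq> 0"
    using I finite_subset[OF _ finite_lists_of_length, of "{I'. length I' = s \<and> mset I' = mset I}" s]
    by (auto simp: card_eq_0_iff)
  ultimately show ?thesis
    using I \<open>ds_form (I @ R) \<noteq> 0\<close> by (simp add: h_def)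
qed

definition remove_nth :: "nat \<Rightarrow> 'a list \<Rightarrow> 'a list" where
  "remove_nth a xs = take a xs @ drop (Suc a) xs"

lemma sum_nth_eq_delta:
  assumes "distinct js" "q < length js" "js ! q = j"
  shows "(\<Sum>a<length js. if js ! a = j then f a else 0) = (f q :: real)"
proof -
  have "(\<Sum>a<length js. if js ! a = j then f a else 0) = (\<Sum>a<length js. if a = q then f a else 0)"
    using assms by (intro sum.cong refl) (metis lessThan_iff nth_eq_iff_index_eq)
  then show ?thesis
    using assms(2) by simp
qed

lemma sum_nth_fixed_swap_invariant:
  assumes h: "swap_invariant h" and p: "p \<le> s"
  shows "(\<Sum>K | length K = Suc s \<and> K ! p = j. h K) = (\<Sum>I | length I = s. h (I @ [j :: 'a::linorder]))"
proof -
  have reinsert: "take p (remove_nth p K) @ j # drop p (remove_nth p K) = K"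
    if "length K = Suc s" "K ! p = j" for K
    using that p id_take_nth_drop[of p K] by (simp add: remove_nth_def)
  have "(\<Sum>K | length K = Suc s \<and> K ! p = j. h K) = (\<Sum>I | length I = s. h (take p I @ j # drop p I))"
    by (rule sum.reindex_bij_witness[where i = "\<lambda>I. take p I @ j # drop p I" and j = "remove_nth p"])
      (use p reinsert in \<open>auto simp: remove_nth_def nth_append\<close>)
  also have "\<dots> = (\<Sum>I | length I = s. h (I @ [j]))"
    by (rule sum.cong[OF refl], rule swap_invariant_mset[OF h])
      (metis append_take_drop_id mset_append mset.simps union_mset_add_mset_right add_mset_add_single)
  finally show ?thesis .
qed

text \<open>Summing g K ds_(K R) over all K, each nonvanishing term contains the index j
  (which is missing from R) exactly once; moving it to the end costs nothing, since
  both g and ds are alternating.\<close>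
lemma sum_ds_form_extract:
  fixes g :: "'n::{finite,linorder} list \<Rightarrow> real"
  assumes anti: "antisym_idx (Suc s) g" and jR: "j \<notin> set R"
  shows "(\<Sum>K | length K = Suc s. g K * ds_form (K @ R))
       = of_nat (Suc s) * (\<Sum>I | length I = s. g (I @ [j]) * ds_form (I @ j # R))"
proof -
  define h where "h = (\<lambda>K. (if length K = Suc s then g K else 0) * ds_form (K @ R))"
  have h: "swap_invariant h"
    unfolding h_def
    by (rule swap_invariant_mult[OF alternating_antisym_idx[OF anti] alternating_append[OF alternating_ds_form]])
  have split_position: "h K = (\<Sum>p<Suc s. if K ! p = j then h K else 0)" if K: "length K = Suc s" for K
  proof (cases "h K = 0")
    case False
    then have "distinct K"
      using antisym_idx_not_distinct[OF anti] K by (auto simp: h_def)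
    from False have "distinct (K @ R)" "length (K @ R) = CARD('n)"
      by (auto simp: h_def ds_form_nonzero_iff)
    then have "j \<in> set K"
      using set_eq_UNIV_if_distinct jR by (metis UNIV_I Un_iff set_append)
    then obtain q where "q < length K" "K ! q = j"
      by (metis in_set_conv_nth)
    then show ?thesis
      using sum_nth_eq_delta[OF \<open>distinct K\<close>, of q j "\<lambda>_. h K"] K by simp
  next
    case True
    then have "(if K ! p = j then h K else 0) = 0" for p
      by simp
    then show ?thesis
      using True by simp
  qed
  have "(\<Sum>K | length K = Suc s. g K * ds_form (K @ R))
      = (\<Sum>K | length K = Suc s. \<Sum>p<Suc s. if K ! p = j then h K else 0)"
    using split_position by (intro sum.cong) (auto simp: h_def)
  also have "\<dots> = (\<Sum>p<Suc s. \<Sum>K | length K = Suc s \<and> K ! p = j. h K)"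
    by (subst sum.swap) (simp add: sum.inter_filter[OF finite_lists_of_length, symmetric] conj_commute)
  also have "\<dots> = of_nat (Suc s) * (\<Sum>I | length I = s. h (I @ [j]))"
    using sum_nth_fixed_swap_invariant[OF h] by simp
  finally show ?thesis
    by (simp add: h_def)
qed

lemma wedge_dx_remove_nth:
  "wedge_dx l \<beta> js = (\<Sum>a<length js. (-1) ^ a * (if js ! a = l then \<beta> (remove_nth a js) else 0))"
  unfolding wedge_dx_def remove_nth_def ..

lemma length_remove_nth: "a < length xs \<Longrightarrow> length (remove_nth a xs) = length xs - 1"
  by (simp add: remove_nth_def)

lemma nth_remove_nth:
  "a < length xs \<Longrightarrow> k < length xs - 1 \<Longrightarrow> remove_nth a xs ! k = (if k < a then xs ! k else xs ! Suc k)"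
  by (simp add: remove_nth_def nth_append min_def)

lemma remove_nth_swap_adj:
  assumes i: "Suc i < length js" and a: "a < length js"
  shows "remove_nth a (swap_adj js i) =
    (if a = i then remove_nth (Suc i) js else if a = Suc i then remove_nth i js
     else if a < i then swap_adj (remove_nth a js) (i - 1) else swap_adj (remove_nth a js) i)"
  using assms
  by (intro nth_equalityI)
    (auto simp: length_remove_nth nth_remove_nth swap_adj_def nth_list_update)

text \<open>Swapping positions i, i+1 of js negates the terms a \<notin> {i, i+1} (by alternation of
  \<beta>) and exchanges the terms a = i and a = i+1 up to the sign (-1)^a.\<close>
lemma alternating_wedge_dx:
  assumes \<beta>: "alternating \<beta>"
  shows "alternating (wedge_dx l \<beta>)"
  unfolding alternating_def
proof (intro allI impI)
  fix js :: "'a list" and i assume i: "Suc i < length js"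
  let ?t = "Transposition.transpose i (Suc i)"
  define trm where "trm = (\<lambda>js a. (-1::real) ^ a * (if js ! a = l then \<beta> (remove_nth a js) else 0))"
  have "trm (swap_adj js i) a = - trm js (?t a)" if a: "a < length js" for a
  proof -
    have "\<beta> (remove_nth a (swap_adj js i)) = - \<beta> (remove_nth a js)" if "a \<noteq> i" "a \<noteq> Suc i"
      using that i a alternatingD[OF \<beta>, of _ "remove_nth a js"]
      by (simp add: remove_nth_swap_adj length_remove_nth)
    moreover have "swap_adj js i ! a = js ! ?t a"
      using i a by (simp add: swap_adj_def nth_list_update Transposition.transpose_def)
    ultimately show ?thesis
      using i a by (auto simp: trm_def remove_nth_swap_adj)
  qed
  moreover have "?t permutes {..<length js}"
    using i by (intro permutes_swap_id) auto
  ultimately have "(\<Sum>a<length js. trm (swap_adj js i) a) = - (\<Sum>a<length js. trm js a)"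
    using sum.permute[of ?t "{..<length js}" "trm js"] by (simp add: sum_negf comp_def)
  then show "wedge_dx l \<beta> (swap_adj js i) = - wedge_dx l \<beta> js"
    by (simp add: wedge_dx_remove_nth trm_def)
qed

lemma wedge_dx_nth:
  assumes "distinct js" "q < length js" "js ! q = j"
  shows "wedge_dx j \<beta> js = (-1) ^ q * \<beta> (remove_nth q js)"
  using sum_nth_eq_delta[OF assms, of "\<lambda>a. (-1) ^ a * \<beta> (remove_nth a js)"]
  by (simp add: wedge_dx_remove_nth if_distrib[of "\<lambda>x. (-1) ^ _ * x"] cong: if_cong)

lemma wedge_dx_not_in_set: "j \<notin> set js \<Longrightarrow> wedge_dx j \<beta> js = 0"
  by (auto simp: wedge_dx_remove_nth in_set_conv_nth)

lemma sum_wedge_dx: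
  "(\<Sum>K\<in>S. g K * wedge_dx j (\<beta> K) js) = wedge_dx j (\<lambda>R. \<Sum>K\<in>S. g K * \<beta> K R) js"
  unfolding wedge_dx_def sum_distrib_left
  by (subst sum.swap) (auto intro!: sum.cong simp: sum_distrib_left)

lemma antisym_idx_snoc_ds_form_eq_0:
  fixes g :: "'n::{finite,linorder} list \<Rightarrow> real"
  assumes anti: "antisym_idx (Suc s) g" and I: "length I = s" and j: "\<not> (distinct js \<and> j \<in> set js)"
  shows "g (I @ [j]) * ds_form (I @ js) = 0"
proof (rule ccontr)
  assume nz: "g (I @ [j]) * ds_form (I @ js) \<noteq> 0"
  then have "distinct (I @ js)" "length (I @ js) = CARD('n)"
    by (simp_all add: ds_form_nonzero_iff)
  then have "j \<in> set I"
    using j set_eq_UNIV_if_distinct by (metis UNIV_I Un_iff distinct_append set_append)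
  then show False
    using nz antisym_idx_not_distinct[OF anti, of "I @ [j]"] I by simp
qed

lemma alternating_sum_prepend:
  assumes "alternating F"
  shows "alternating (\<lambda>R. \<Sum>K\<in>S. g K * F (K @ R))"
  unfolding alternating_def
proof (intro allI impI)
  fix L :: "'a list" and i assume "Suc i < length L"
  then have "F (K @ swap_adj L i) = - F (K @ L)" for K
    using alternatingD[OF alternating_prepend[OF assms]] by blast
  then show "(\<Sum>K\<in>S. g K * F (K @ swap_adj L i)) = - (\<Sum>K\<in>S. g K * F (K @ L))"
    by (simp add: sum_negf)
qed

text \<open>Each of the s + 1 positions of j in K contributes the same amount, by dx^j \<and> ds_(I j) = ds_I.\<close>
lemma sum_wedge_dx_ds_idx:
  fixes g :: "'n::{finite,linorder} list \<Rightarrow> real"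
  assumes anti: "antisym_idx (Suc s) g"
  shows "(\<Sum>K | length K = Suc s. g K * wedge_dx j (ds_idx K) js)
       = of_nat (Suc s) * (\<Sum>I | length I = s. g (I @ [j]) * ds_idx I js)"
proof -
  define T where "T = (\<lambda>R. \<Sum>K | length K = Suc s. g K * ds_form (K @ R))"
  have "(\<Sum>K | length K = Suc s. g K * wedge_dx j (ds_idx K) js) = wedge_dx j T js"
    unfolding sum_wedge_dx T_def ds_idx_def ..
  also have "\<dots> = of_nat (Suc s) * (\<Sum>I | length I = s. g (I @ [j]) * ds_form (I @ js))"
  proof (cases "distinct js \<and> j \<in> set js")
    case True
    then obtain q where q: "q < length js" "js ! q = j"
      by (metis in_set_conv_nth)
    then have js: "js = take q js @ j # drop (Suc q) js"
      by (metis id_take_nth_drop)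
    then have "distinct (take q js @ j # drop (Suc q) js)"
      using True by simp
    then have "j \<notin> set (remove_nth q js)"
      by (simp add: remove_nth_def)
    have move: "ds_form (I @ j # remove_nth q js) = (-1) ^ q * ds_form (I @ js)" for I
      using alternating_move[OF alternating_ds_form, of I j "take q js" "drop (Suc q) js"] js q
      by (simp add: remove_nth_def min_def)
    have "wedge_dx j T js = (-1) ^ q * T (remove_nth q js)"
      using True q by (intro wedge_dx_nth) auto
    also have "T (remove_nth q js)
        = of_nat (Suc s) * (\<Sum>I | length I = s. g (I @ [j]) * ds_form (I @ j # remove_nth q js))"
      unfolding T_def by (rule sum_ds_form_extract[OF anti \<open>j \<notin> set (remove_nth q js)\<close>])
    finally show ?thesis
      by (simp add: move sum_distrib_left algebra_simps flip: power_add power_mult_distrib)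
  next
    case False
    have "wedge_dx j T js = 0"
      using False wedge_dx_not_in_set alternating_not_distinct alternating_wedge_dx
        alternating_sum_prepend[OF alternating_ds_form] unfolding T_def by blast
    moreover have "g (I @ [j]) * ds_form (I @ js) = 0" if "length I = s" for I
      using antisym_idx_snoc_ds_form_eq_0[OF anti that False] .
    ultimately show ?thesis
      by (simp add: sum.neutral)
  qed
  finally show ?thesis
    by (simp add: ds_idx_def)
qed

section \<open>Antisymmetrization\<close>

lemma antisym_idx_add: "antisym_idx p f \<Longrightarrow> antisym_idx p g \<Longrightarrow> antisym_idx p (\<lambda>I. f I + g I)"
  and antisym_idx_diff: "antisym_idx p f \<Longrightarrow> antisym_idx p g \<Longrightarrow> antisym_idx p (\<lambda>I. f I - g I)"
  and antisym_idx_cmult: "antisym_idx p f \<Longrightarrow> antisym_idx p (\<lambda>I. c * f I)"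
  and antisym_idx_multc: "antisym_idx p f \<Longrightarrow> antisym_idx p (\<lambda>I. f I * c)"
  and antisym_idx_sum: "(\<And>x. antisym_idx p (F x)) \<Longrightarrow> antisym_idx p (\<lambda>I. \<Sum>x\<in>S. F x I)"
  unfolding antisym_idx_def by (simp_all add: sum_negf)

lemma antisym_idx_snoc: "antisym_idx (Suc s) g \<Longrightarrow> antisym_idx s (\<lambda>I. g (I @ [j]))"
  unfolding antisym_idx_def
proof (intro allI impI)
  fix xs :: "'a list" and a b
  assume "\<forall>xs a b. length xs = Suc s \<and> a < b \<and> b < Suc s \<longrightarrow> g (xs[a := xs ! b, b := xs ! a]) = - g xs"
    and ab: "length xs = s \<and> a < b \<and> b < s"
  moreover have "(xs @ [j])[a := (xs @ [j]) ! b, b := (xs @ [j]) ! a] = xs[a := xs ! b, b := xs ! a] @ [j]"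
    using ab by (simp add: list_update_append nth_append)
  ultimately show "g (xs[a := xs ! b, b := xs ! a] @ [j]) = - g (xs @ [j])"
    by (metis length_append_singleton less_SucI)
qed

lemma map_nth_transpose:
  assumes "length L = p" "a < p" "b < p"
  shows "map (\<lambda>k. L ! Transposition.transpose a b k) [0..<p] = L[a := L ! b, b := L ! a]"
  using assms by (intro nth_equalityI) (auto simp: nth_list_update Transposition.transpose_def)

lemma antisym_idx_swap:
  assumes anti: "antisym_idx p c" and "length L = p" "a < p" "b < p" "a \<noteq> b"
  shows "c (L[a := L ! b, b := L ! a]) = - c L"
proof (cases "a < b")
  case False
  then have "L[a := L ! b, b := L ! a] = L[b := L ! a, a := L ! b]"
    using assms(5) by (simp add: list_update_swap)
  then show ?thesis
    using anti assms False unfolding antisym_idx_def by (simp add: not_less order.strict_iff_order)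
qed (use assms in \<open>simp add: antisym_idx_def\<close>)

lemma antisym_idx_permute:
  assumes anti: "antisym_idx p c" and K: "length K = p" and \<pi>: "\<pi> permutes {..<p}"
  shows "c (map (\<lambda>k. K ! \<pi> k) [0..<p]) = of_int (sign \<pi>) * c K"
  using finite_lessThan[of p] \<pi>
proof (induction rule: permutes_rev_induct)
  case id
  have "map (\<lambda>k. K ! id k) [0..<p] = K"
    using K by (intro nth_equalityI) auto
  then show ?case by simp
next
  case (swap a b \<pi>)
  let ?L = "map (\<lambda>k. K ! \<pi> k) [0..<p]"
  have "map (\<lambda>k. K ! (\<pi> \<circ> Transposition.transpose a b) k) [0..<p]
      = map (\<lambda>k. ?L ! Transposition.transpose a b k) [0..<p]"
    using swap(1,2) by (intro map_cong refl) (auto simp: Transposition.transpose_def)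
  also have "\<dots> = ?L[a := ?L ! b, b := ?L ! a]"
    using swap(1,2) by (intro map_nth_transpose) auto
  also have "c \<dots> = - c ?L"
    using swap(1-3) by (intro antisym_idx_swap[OF anti]) auto
  also have "sign (\<pi> \<circ> Transposition.transpose a b) = - sign \<pi>"
    using swap(3) permutes_imp_permutation[OF finite_lessThan swap(4)]
    by (simp add: sign_compose permutation_swap_id sign_swap_id)
  ultimately show ?case
    using swap(5) by (simp del: o_apply add: comp_def[symmetric])
qed

lemma alt_permute:
  assumes K: "length K = p" and \<pi>: "\<pi> permutes {..<p}"
  shows "alt f (map (\<lambda>k. K ! \<pi> k) [0..<p]) = of_int (sign \<pi>) * alt f K"
proof -
  let ?P = "{\<rho>. \<rho> permutes {..<p}}"
  define F where "F = (\<lambda>\<rho>. of_int (sign \<rho>) * f (map (\<lambda>k. K ! \<rho> k) [0..<p]))"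
  have "alt f (map (\<lambda>k. K ! \<pi> k) [0..<p])
      = (1 / fact p) * (\<Sum>\<rho>\<in>?P. of_int (sign \<rho>) * f (map (\<lambda>k. K ! (\<pi> \<circ> \<rho>) k) [0..<p]))"
    unfolding alt_def using permutes_in_image[of _ "{..<p}"]
    by (auto intro!: sum.cong arg_cong[where f = f] map_cong)
  also have "\<dots> = (1 / fact p) * (\<Sum>\<rho>\<in>?P. of_int (sign \<pi>) * F (\<pi> \<circ> \<rho>))"
  proof (intro arg_cong[where f = "(*) _"] sum.cong refl)
    fix \<rho> assume "\<rho> \<in> ?P"
    then have "sign (\<pi> \<circ> \<rho>) = sign \<pi> * sign \<rho>"
      using \<pi> sign_compose[OF permutes_imp_permutation permutes_imp_permutation] by blast
    then have "(of_int (sign \<rho>) :: real) = of_int (sign \<pi>) * of_int (sign (\<pi> \<circ> \<rho>))"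
      by (simp add: mult.assoc[symmetric] sign_idempotent flip: of_int_mult)
    then show "of_int (sign \<rho>) * f (map (\<lambda>k. K ! (\<pi> \<circ> \<rho>) k) [0..<p]) = of_int (sign \<pi>) * F (\<pi> \<circ> \<rho>)"
      by (simp add: F_def)
  qed
  also have "(\<Sum>\<rho>\<in>?P. F (\<pi> \<circ> \<rho>)) = (\<Sum>\<rho>\<in>?P. F \<rho>)"
    using setum_permutations_compose_left[OF \<pi>, of F] by (simp add: comp_def)
  ultimately show ?thesis
    using K by (simp add: alt_def F_def sum_distrib_left[symmetric] mult.left_commute)
qed

lemma antisym_idx_alt: "antisym_idx p (alt f)"
  unfolding antisym_idx_def
proof (intro allI impI)
  fix xs :: "'a list" and a b assume ab: "length xs = p \<and> a < b \<and> b < p"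
  then have "Transposition.transpose a b permutes {..<p}"
    by (intro permutes_swap_id) auto
  then have "alt f (map (\<lambda>k. xs ! Transposition.transpose a b k) [0..<p])
      = of_int (sign (Transposition.transpose a b)) * alt f xs"
    using ab by (intro alt_permute) auto
  then show "alt f (xs[a := xs ! b, b := xs ! a]) = - alt f xs"
    using map_nth_transpose[of xs p a b] ab by (simp add: sign_swap_id)
qed

lemma alt_eq_self_if_antisym_idx:
  assumes anti: "antisym_idx p c" and K: "length K = p"
  shows "alt c K = c K"
proof -
  have "alt c K = (1 / fact p) * (\<Sum>\<rho> | \<rho> permutes {..<p}. c K)"
    unfolding alt_def using K antisym_idx_permute[OF anti K]
    by (simp add: mult.assoc[symmetric] flip: of_int_mult)
  also have "\<dots> = c K"
    using card_permutations[of "{..<p}" p] by simp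
  finally show ?thesis .
qed

lemma alt_cong: "(\<And>L. length L = length K \<Longrightarrow> f L = g L) \<Longrightarrow> alt f K = alt g K"
  unfolding alt_def by (intro arg_cong[where f = "\<lambda>x. _ * x"] sum.cong refl) simp

lemma alt_add: "alt (\<lambda>L. f L + g L) K = alt f K + alt g K"
  unfolding alt_def by (simp add: sum.distrib algebra_simps)

lemma alt_diff: "alt (\<lambda>L. f L - g L) K = alt f K - alt g K"
  unfolding alt_def by (simp add: sum_subtractf algebra_simps)

lemma alt_cmult: "alt (\<lambda>L. c * f L) K = c * alt f K"
  unfolding alt_def by (simp add: sum_distrib_left algebra_simps)

section \<open>Formal derivatives\<close>

definition finite_order :: "(('n::{finite,linorder},'m::finite) jpt \<Rightarrow> real) \<Rightarrow> bool" where
  "finite_order F \<longleftrightarrow> (\<exists>k. has_order k F)"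

lemma finite_multisets_size_le: "finite {J :: 'a::finite multiset. size J \<le> N}"
proof (rule finite_subset)
  show "{J :: 'a multiset. size J \<le> N} \<subseteq> mset ` {xs. set xs \<subseteq> UNIV \<and> length xs \<le> N}"
  proof
    fix J :: "'a multiset" assume "J \<in> {J. size J \<le> N}"
    moreover obtain xs where "mset xs = J"
      using ex_mset by blast
    ultimately show "J \<in> mset ` {xs. set xs \<subseteq> UNIV \<and> length xs \<le> N}"
      by auto
  qed
  show "finite (mset ` {xs :: 'a list. set xs \<subseteq> UNIV \<and> length xs \<le> N})"
    by (intro finite_imageI finite_lists_length_le) simp
qed

lemma has_order_mono: "has_order k F \<Longrightarrow> k \<le> k' \<Longrightarrow> has_order k' F"
  unfolding has_order_def by (meson order_trans)

lemma has_order_ford: "has_order k F \<Longrightarrow> has_order (ford F) F"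
  unfolding ford_def by (rule LeastI)

lemma pdy_eq_0_above_order:
  assumes "has_order k F" "k < size J"
  shows "pdy \<sigma> J F P = 0"
proof -
  have "fst (upd_y \<sigma> J t P) = fst P" "\<forall>J'. size J' \<le> k \<longrightarrow> snd (upd_y \<sigma> J t P) J' = snd P J'" for t
    using assms(2) by (auto simp: upd_y_def)
  then have "F (upd_y \<sigma> J t P) = F P" for t
    using assms(1) unfolding has_order_def by blast
  then show ?thesis
    by (simp add: pdy_def)
qed

lemma fd_eq_sum_size_le:
  assumes "has_order k F" "k \<le> N"
  shows "fd i F P = pdx i F P +
     (\<Sum>J | size J \<le> N. \<Sum>\<sigma>\<in>UNIV. snd P (J + {#i#}) $ \<sigma> * pdy \<sigma> J F P)"
proof -
  have "ford F \<le> N"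
    using assms unfolding ford_def by (meson Least_le order_trans)
  then show ?thesis
    unfolding fd_def
    by (intro arg_cong[where f = "(+) _"] sum.mono_neutral_left finite_multisets_size_le)
      (auto simp: pdy_eq_0_above_order[OF has_order_ford[OF assms(1)]])
qed

lemma finite_order_common_boundE:
  assumes "finite S" "\<And>x. x \<in> S \<Longrightarrow> finite_order (F x)"
  obtains k where "\<And>x. x \<in> S \<Longrightarrow> has_order k (F x)"
proof -
  obtain kf where "\<And>x. x \<in> S \<Longrightarrow> has_order (kf x) (F x)"
    using assms(2) unfolding finite_order_def by metis
  then have "has_order (Max (kf ` S)) (F x)" if "x \<in> S" for x
    using that assms(1) by (meson Max_ge finite_imageI imageI has_order_mono)
  then show ?thesis using that by blast
qed

lemma finite_order_sum:
  assumes "finite S" "\<And>x. x \<in> S \<Longrightarrow> finite_order (F x)"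
  shows "finite_order (\<lambda>Q. \<Sum>x\<in>S. F x Q)"
proof -
  obtain k where "\<And>x. x \<in> S \<Longrightarrow> has_order k (F x)"
    using finite_order_common_boundE assms by blast
  then have "has_order k (\<lambda>Q. \<Sum>x\<in>S. F x Q)"
    unfolding has_order_def by (metis (mono_tags, lifting) sum.cong)
  then show ?thesis
    unfolding finite_order_def by blast
qed

lemma has_order_comb: "has_order k F \<Longrightarrow> has_order k G \<Longrightarrow> has_order k (\<lambda>Q. h (F Q) (G Q))"
  unfolding has_order_def by metis

lemma finite_order_pair_boundE:
  assumes "finite_order F" "finite_order G"
  obtains k where "has_order k F" "has_order k G"
  using assms unfolding finite_order_def by (metis has_order_mono max.cobounded1 max.cobounded2)

lemma finite_order_comb: "finite_order F \<Longrightarrow> finite_order G \<Longrightarrow> finite_order (\<lambda>Q. h (F Q) (G Q))"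
  by (metis finite_order_pair_boundE finite_order_def has_order_comb)

lemma finite_order_const: "finite_order (\<lambda>Q. c)"
  unfolding finite_order_def has_order_def by simp

lemma pdiff_on_mult: "pdiff_on {P} F \<Longrightarrow> pdiff_on {P} G \<Longrightarrow> pdiff_on {P} (\<lambda>Q. F Q * G Q)"
  and pdiff_on_const: "pdiff_on {P} (\<lambda>Q. c)"
  unfolding pdiff_on_def by (simp_all add: differentiable_mult)

lemma pdiff_on_sum: "finite S \<Longrightarrow> (\<And>x. x \<in> S \<Longrightarrow> pdiff_on {P} (F x)) \<Longrightarrow> pdiff_on {P} (\<lambda>Q. \<Sum>x\<in>S. F x Q)"
  unfolding pdiff_on_def by (simp add: differentiable_sum)

lemma pdiff_on_cmult: "pdiff_on {P} F \<Longrightarrow> pdiff_on {P} (\<lambda>Q. c * F Q)"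
  by (rule pdiff_on_mult[OF pdiff_on_const])

lemma field_differentiable_if_real_differentiable:
  "(f :: real \<Rightarrow> real) differentiable (at x) \<Longrightarrow> f field_differentiable (at x)"
  using DERIV_deriv_iff_real_differentiable DERIV_deriv_iff_field_differentiable by blast

lemma upd_x_same [simp]: "upd_x i (fst P $ i) P = P"
  by (simp add: upd_x_def vec_eq_iff prod_eq_iff)

lemma upd_y_same [simp]: "upd_y \<sigma> J (snd P J $ \<sigma>) P = P"
  by (simp add: upd_y_def vec_eq_iff prod_eq_iff fun_eq_iff)

lemma fd_add:
  assumes "finite_order F" "finite_order G" "pdiff_on {P} F" "pdiff_on {P} G"
  shows "fd i (\<lambda>Q. F Q + G Q) P = fd i F P + fd i G P"
proof -
  obtain k where k: "has_order k F" "has_order k G"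
    using finite_order_pair_boundE[OF assms(1,2)] .
  have "pdx i (\<lambda>Q. F Q + G Q) P = pdx i F P + pdx i G P"
    "pdy \<sigma> J (\<lambda>Q. F Q + G Q) P = pdy \<sigma> J F P + pdy \<sigma> J G P" for \<sigma> J
    using assms(3,4) unfolding pdx_def pdy_def pdiff_on_def
    by (simp_all add: field_differentiable_if_real_differentiable)
  then show ?thesis
    unfolding fd_eq_sum_size_le[OF k(1) order_refl] fd_eq_sum_size_le[OF k(2) order_refl]
      fd_eq_sum_size_le[OF has_order_comb[OF k] order_refl]
    by (simp add: sum.distrib algebra_simps)
qed

lemma fd_mult:
  assumes "finite_order F" "finite_order G" "pdiff_on {P} F" "pdiff_on {P} G"
  shows "fd i (\<lambda>Q. F Q * G Q) P = fd i F P * G P + F P * fd i G P"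
proof -
  obtain k where k: "has_order k F" "has_order k G"
    using finite_order_pair_boundE[OF assms(1,2)] .
  have "pdx i (\<lambda>Q. F Q * G Q) P = pdx i F P * G P + F P * pdx i G P"
    "pdy \<sigma> J (\<lambda>Q. F Q * G Q) P = pdy \<sigma> J F P * G P + F P * pdy \<sigma> J G P" for \<sigma> J
    using assms(3,4) unfolding pdx_def pdy_def pdiff_on_def
    by (simp_all add: field_differentiable_if_real_differentiable)
  then show ?thesis
    unfolding fd_eq_sum_size_le[OF k(1) order_refl] fd_eq_sum_size_le[OF k(2) order_refl]
      fd_eq_sum_size_le[OF has_order_comb[OF k] order_refl]
    by (simp add: sum.distrib algebra_simps sum_distrib_left sum_distrib_right)
qed

lemma fd_const: "fd i (\<lambda>Q. c) P = 0"
  using fd_eq_sum_size_le[of 0 "\<lambda>Q. c" 0] by (simp add: has_order_def pdx_def pdy_def)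

lemma fd_cmult: "finite_order F \<Longrightarrow> pdiff_on {P} F \<Longrightarrow> fd i (\<lambda>Q. c * F Q) P = c * fd i F P"
  using fd_mult[OF finite_order_const _ pdiff_on_const] by (simp add: fd_const)

lemma fd_sum:
  assumes "finite S" "\<And>x. x \<in> S \<Longrightarrow> finite_order (F x)" "\<And>x. x \<in> S \<Longrightarrow> pdiff_on {P} (F x)"
  shows "fd i (\<lambda>Q. \<Sum>x\<in>S. F x Q) P = (\<Sum>x\<in>S. fd i (F x) P)"
  using assms
proof (induction S rule: finite_induct)
  case (insert x S)
  then show ?case
    by (simp add: fd_add finite_order_sum pdiff_on_sum)
qed (simp add: fd_const)

section \<open>Functions on the jet domain\<close>

definition jet_base :: "('n::{finite,linorder},'m::finite) jpt \<Rightarrow> (real^'n::{finite,linorder}) \<times> (real^'m::finite)" where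
  "jet_base P = (fst P, snd P {#})"

lemma jdom_iff_jet_base: "P \<in> jdom W \<longleftrightarrow> jet_base P \<in> W"
  by (simp add: jdom_def jet_base_def)

lemma j1proj_in_j1dom: "P \<in> jdom W \<Longrightarrow> j1proj P \<in> j1dom W"
  by (simp add: jdom_def j1dom_def j1proj_def)

lemma jet_base_upd_x: "jet_base (upd_x i t P) = jet_base (upd_x i 0 P) + t *\<^sub>R (jet_base (upd_x i 1 P) - jet_base (upd_x i 0 P))"
  and jet_base_upd_y: "jet_base (upd_y \<sigma> J t P) = jet_base (upd_y \<sigma> J 0 P) + t *\<^sub>R (jet_base (upd_y \<sigma> J 1 P) - jet_base (upd_y \<sigma> J 0 P))"
  and j1proj_upd_x: "j1proj (upd_x i t P) = j1proj (upd_x i 0 P) + t *\<^sub>R (j1proj (upd_x i 1 P) - j1proj (upd_x i 0 P))"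
  and j1proj_upd_y: "j1proj (upd_y \<sigma> J t P) = j1proj (upd_y \<sigma> J 0 P) + t *\<^sub>R (j1proj (upd_y \<sigma> J 1 P) - j1proj (upd_y \<sigma> J 0 P))"
  by (simp_all add: jet_base_def j1proj_def upd_x_def upd_y_def vec_eq_iff prod_eq_iff)

lemma differentiable_compose_affine:
  fixes f :: "'a::real_normed_vector \<Rightarrow> real"
  assumes \<phi>: "\<And>t. \<phi> t = a + t *\<^sub>R b" and f: "f differentiable (at (\<phi> x))"
  shows "(\<lambda>t. f (\<phi> t)) differentiable (at x)"
proof -
  have "(\<lambda>t. a + t *\<^sub>R b) differentiable (at x)"
    by (rule differentiableI) (auto intro!: derivative_eq_intros)
  from differentiable_chain_at[OF this] f show ?thesis
    by (simp add: \<phi> comp_def)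
qed

lemma eventually_affine_in_open:
  fixes \<phi> :: "real \<Rightarrow> 'a::real_normed_vector"
  assumes W: "open W" and \<phi>: "\<And>t. \<phi> t = a + t *\<^sub>R b" and x: "\<phi> x \<in> W"
  shows "eventually (\<lambda>t. \<phi> t \<in> W) (nhds x)"
proof -
  have "continuous_on UNIV \<phi>"
    unfolding \<phi> by (intro continuous_intros)
  then have "open (\<phi> -` W)"
    using W by (intro open_vimage)
  moreover have "x \<in> \<phi> -` W"
    using x by simp
  ultimately have "eventually (\<lambda>t. t \<in> \<phi> -` W) (nhds x)"
    by (rule eventually_nhds_in_open)
  then show ?thesis
    by simp
qed

text \<open>Partial derivatives are taken along coordinate lines; both projections onto the
  chart are affine along them.\<close>
lemma pdiff_on_compose_affine:
  assumes f: "f differentiable (at (g P))"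
    and g_x: "\<And>i t. g (upd_x i t P) = g (upd_x i 0 P) + t *\<^sub>R (g (upd_x i 1 P) - g (upd_x i 0 P))"
    and g_y: "\<And>\<sigma> J t. g (upd_y \<sigma> J t P) = g (upd_y \<sigma> J 0 P) + t *\<^sub>R (g (upd_y \<sigma> J 1 P) - g (upd_y \<sigma> J 0 P))"
  shows "pdiff_on {P} (\<lambda>Q. f (g Q))"
  unfolding pdiff_on_def
proof (intro ballI conjI allI)
  fix Q i \<sigma> J assume "Q \<in> {P}"
  then have Q: "Q = P" by simp
  show "(\<lambda>t. f (g (upd_x i t Q))) differentiable (at (fst Q $ i))"
    using differentiable_compose_affine[where f = f and x = "fst P $ i", OF g_x] f Q by simp
  show "(\<lambda>t. f (g (upd_y \<sigma> J t Q))) differentiable (at (snd Q J $ \<sigma>))"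
    using differentiable_compose_affine[where f = f and x = "snd P J $ \<sigma>", OF g_y] f Q by simp
qed

lemma smooth_fun_on_differentiable: "smooth_fun_on S f \<Longrightarrow> x \<in> S \<Longrightarrow> f differentiable (at x)"
  unfolding smooth_fun_on_def by (metis Ck_on.simps(2))

lemma pdiff_on_liftA:
  "P \<in> jdom W \<Longrightarrow> smooth_fun_on (j1dom W) f \<Longrightarrow> pdiff_on {P} (liftA f)"
  unfolding liftA_def
  by (rule pdiff_on_compose_affine[OF _ j1proj_upd_x j1proj_upd_y])
    (simp add: smooth_fun_on_differentiable j1proj_in_j1dom)

lemma pdiff_on_Xi0: "P \<in> jdom W \<Longrightarrow> vert_field W Xi \<Longrightarrow> pdiff_on {P} (Xi0 Xi \<sigma>)"
proof -
  assume "P \<in> jdom W" "vert_field W Xi"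
  then have "(\<lambda>z. Xi z $ \<sigma>) differentiable (at (jet_base P))"
    unfolding vert_field_def jdom_iff_jet_base by (metis smooth_fun_on_differentiable)
  then have "pdiff_on {P} (\<lambda>Q. Xi (jet_base Q) $ \<sigma>)"
    by (rule pdiff_on_compose_affine[OF _ jet_base_upd_x jet_base_upd_y])
  then show ?thesis
    unfolding Xi0_def jet_base_def .
qed

lemma finite_order_liftA: "finite_order (liftA f)"
proof -
  have "has_order 1 (liftA f)"
    unfolding has_order_def liftA_def j1proj_def
  proof (intro allI impI)
    fix P Q :: "('a, 'b) jpt"
    assume PQ: "fst P = fst Q \<and> (\<forall>J. size J \<le> 1 \<longrightarrow> snd P J = snd Q J)"
    then have "snd P {#} = snd Q {#}" "\<And>j. snd P {#j#} = snd Q {#j#}"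
      by auto
    then show "f (fst P, snd P {#}, \<chi> \<sigma> j. snd P {#j#} $ \<sigma>) = f (fst Q, snd Q {#}, \<chi> \<sigma> j. snd Q {#j#} $ \<sigma>)"
      using PQ by simp
  qed
  then show ?thesis
    unfolding finite_order_def ..
qed

lemma has_order_Xi0: "has_order 0 (Xi0 Xi \<sigma>)"
  unfolding has_order_def Xi0_def by auto

lemma finite_order_Xi0: "finite_order (Xi0 Xi \<sigma>)"
  unfolding finite_order_def using has_order_Xi0 by blast

lemma fd_local:
  assumes W: "open W" and P: "P \<in> jdom W" and F: "finite_order F" and G: "finite_order G"
    and eq: "\<And>Q. Q \<in> jdom W \<Longrightarrow> F Q = G Q"
  shows "fd i F P = fd i G P"
proof -
  obtain k where k: "has_order k F" "has_order k G"
    using finite_order_pair_boundE[OF F G] .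
  have "jet_base P \<in> W"
    using P by (simp add: jdom_iff_jet_base)
  then have ev_x: "eventually (\<lambda>t. jet_base (upd_x i t P) \<in> W) (nhds (fst P $ i))"
    and ev_y: "eventually (\<lambda>t. jet_base (upd_y \<sigma> J t P) \<in> W) (nhds (snd P J $ \<sigma>))" for \<sigma> J
    by (simp_all add: eventually_affine_in_open[OF W jet_base_upd_x] eventually_affine_in_open[OF W jet_base_upd_y])
  have "eventually (\<lambda>t. F (upd_x i t P) = G (upd_x i t P)) (nhds (fst P $ i))"
    using ev_x by (rule eventually_mono) (simp add: eq jdom_iff_jet_base)
  moreover have "eventually (\<lambda>t. F (upd_y \<sigma> J t P) = G (upd_y \<sigma> J t P)) (nhds (snd P J $ \<sigma>))" for \<sigma> J
    using ev_y by (rule eventually_mono) (simp add: eq jdom_iff_jet_base)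
  ultimately have "pdx i F P = pdx i G P" "pdy \<sigma> J F P = pdy \<sigma> J G P" for \<sigma> J
    unfolding pdx_def pdy_def by (blast intro: deriv_cong_ev)+
  then show ?thesis
    unfolding fd_eq_sum_size_le[OF k(1) order_refl] fd_eq_sum_size_le[OF k(2) order_refl] by simp
qed

section \<open>The canonical splitting\<close>

lemma Div_eq_sum_ds_idx:
  assumes anti: "\<And>l. antisym_idx (Suc s) (\<lambda>K. fd l (f K) P)"
  shows "Div (Suc s) f P js
    = (\<Sum>I | length I = s. (of_nat (Suc s) * (\<Sum>l\<in>UNIV. fd l (f (I @ [l])) P)) * ds_idx I js)"
proof -
  have "Div (Suc s) f P js = (\<Sum>l\<in>UNIV. \<Sum>K | length K = Suc s. fd l (f K) P * wedge_dx l (ds_idx K) js)"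
    unfolding Div_def by (rule sum.swap)
  also have "\<dots> = (\<Sum>l\<in>UNIV. of_nat (Suc s) * (\<Sum>I | length I = s. fd l (f (I @ [l])) P * ds_idx I js))"
    using sum_wedge_dx_ds_idx[OF anti] by simp
  also have "\<dots> = (\<Sum>I | length I = s. (of_nat (Suc s) * (\<Sum>l\<in>UNIV. fd l (f (I @ [l])) P)) * ds_idx I js)"
    by (simp add: sum_distrib_left sum_distrib_right sum.swap[of _ UNIV] mult.assoc)
  finally show ?thesis .
qed

lemma alt_expand:
  "(\<lambda>Q. alt (\<lambda>ls. F ls Q) K) = (\<lambda>Q. (1 / fact (length K)) *
     (\<Sum>\<pi> | \<pi> permutes {..<length K}. of_int (sign \<pi>) * F (map (\<lambda>k. K ! \<pi> k) [0..<length K]) Q))"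
  by (simp add: alt_def)

lemma finite_order_alt:
  assumes "\<And>ls. finite_order (F ls)"
  shows "finite_order (\<lambda>Q. alt (\<lambda>ls. F ls Q) K)"
  unfolding alt_expand
  by (rule finite_order_comb[OF finite_order_const], rule finite_order_sum[OF finite_permutations],
      simp, rule finite_order_comb[OF finite_order_const assms])

lemma pdiff_on_alt:
  assumes "\<And>ls. pdiff_on {P} (F ls)"
  shows "pdiff_on {P} (\<lambda>Q. alt (\<lambda>ls. F ls Q) K)"
  unfolding alt_expand
  by (rule pdiff_on_cmult, rule pdiff_on_sum[OF finite_permutations], simp, rule pdiff_on_cmult[OF assms])

lemma fd_alt:
  assumes fo: "\<And>ls. finite_order (F ls)" and pd: "\<And>ls. pdiff_on {P} (F ls)"
  shows "fd l (\<lambda>Q. alt (\<lambda>ls. F ls Q) K) P = alt (\<lambda>ls. fd l (F ls) P) K"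
proof -
  let ?S = "{\<pi>. \<pi> permutes {..<length K}}"
  let ?L = "\<lambda>\<pi>. map (\<lambda>k. K ! \<pi> k) [0..<length K]"
  have fin: "finite ?S"
    by (rule finite_permutations) simp
  have fo': "finite_order (\<lambda>Q. of_int (sign \<pi>) * F (?L \<pi>) Q)" for \<pi>
    by (rule finite_order_comb[OF finite_order_const fo])
  have pd': "pdiff_on {P} (\<lambda>Q. of_int (sign \<pi>) * F (?L \<pi>) Q)" for \<pi>
    by (rule pdiff_on_cmult[OF pd])
  have "fd l (\<lambda>Q. alt (\<lambda>ls. F ls Q) K) P
      = (1 / fact (length K)) * fd l (\<lambda>Q. \<Sum>\<pi>\<in>?S. of_int (sign \<pi>) * F (?L \<pi>) Q) P"
    unfolding alt_expand
    by (rule fd_cmult, rule finite_order_sum[OF fin fo'], rule pdiff_on_sum[OF fin pd'])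
  also have "\<dots> = (1 / fact (length K)) * (\<Sum>\<pi>\<in>?S. of_int (sign \<pi>) * fd l (F (?L \<pi>)) P)"
    by (simp add: fd_sum[OF fin fo' pd'] fd_cmult[OF fo pd])
  finally show ?thesis
    by (simp add: alt_def)
qed

lemma that_eq_alt: "that A1 K \<sigma> = (\<lambda>Q. alt (\<lambda>ls. liftA (A1 (butlast ls) (last ls) \<sigma>) Q) K)"
  by (simp add: that_def fun_eq_iff)

lemma finite_order_that: "finite_order (that A1 K \<sigma>)"
  unfolding that_eq_alt by (rule finite_order_alt[OF finite_order_liftA])

lemma pdiff_on_that:
  "P \<in> jdom W \<Longrightarrow> (\<And>I j \<sigma>. smooth_fun_on (j1dom W) (A1 I j \<sigma>)) \<Longrightarrow> pdiff_on {P} (that A1 K \<sigma>)"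
  unfolding that_eq_alt by (rule pdiff_on_alt, rule pdiff_on_liftA)

lemma fd_that:
  "P \<in> jdom W \<Longrightarrow> (\<And>I j \<sigma>. smooth_fun_on (j1dom W) (A1 I j \<sigma>)) \<Longrightarrow>
    fd l (that A1 K \<sigma>) P = alt (\<lambda>ls. fd l (liftA (A1 (butlast ls) (last ls) \<sigma>)) P) K"
  unfolding that_eq_alt by (rule fd_alt[OF finite_order_liftA pdiff_on_liftA])

lemma antisym_idx_that: "antisym_idx p (\<lambda>K. that A1 K \<sigma> P)"
  unfolding that_def by (rule antisym_idx_alt)

lemma fd_Tprime_coeff:
  assumes P: "P \<in> jdom W" and A1: "\<And>I j \<sigma>. smooth_fun_on (j1dom W) (A1 I j \<sigma>)"
    and Xi: "vert_field W Xi"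
  shows "fd l (Tprime_coeff s A1 Xi K) P =
     1 / (of_nat s + 1) * (\<Sum>\<sigma>\<in>UNIV. fd l (that A1 K \<sigma>) P * Xi0 Xi \<sigma> P + that A1 K \<sigma> P * Xi1 Xi \<sigma> l P)"
proof -
  have fo: "finite_order (\<lambda>Q. that A1 K \<sigma> Q * Xi0 Xi \<sigma> Q)" for \<sigma>
    by (rule finite_order_comb[OF finite_order_that finite_order_Xi0])
  have pd: "pdiff_on {P} (\<lambda>Q. that A1 K \<sigma> Q * Xi0 Xi \<sigma> Q)" for \<sigma>
    by (rule pdiff_on_mult[OF pdiff_on_that[OF P A1] pdiff_on_Xi0[OF P Xi]])
  have "fd l (Tprime_coeff s A1 Xi K) P
      = 1 / (of_nat s + 1) * fd l (\<lambda>Q. \<Sum>\<sigma>\<in>UNIV. that A1 K \<sigma> Q * Xi0 Xi \<sigma> Q) P"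
    unfolding Tprime_coeff_def
    by (rule fd_cmult[OF finite_order_sum pdiff_on_sum]) (simp_all add: fo pd)
  also have "\<dots> = 1 / (of_nat s + 1) * (\<Sum>\<sigma>\<in>UNIV. fd l (\<lambda>Q. that A1 K \<sigma> Q * Xi0 Xi \<sigma> Q) P)"
    by (simp add: fd_sum fo pd)
  finally show ?thesis
    unfolding Xi1_def
    by (simp add: fd_mult[OF finite_order_that finite_order_Xi0 pdiff_on_that[OF P A1] pdiff_on_Xi0[OF P Xi]])
qed

lemma Vrho_eq_Eprime_plus_Div_Tprime:
  assumes P: "P \<in> jdom W" and A1: "\<And>I j \<sigma>. smooth_fun_on (j1dom W) (A1 I j \<sigma>)"
    and Xi: "vert_field W Xi"
  shows "Vrho s A0 A1 Xi P js = Eprime s A0 A1 Xi P js + Div (Suc s) (Tprime_coeff s A1 Xi) P js"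
proof -
  have anti: "antisym_idx (Suc s) (\<lambda>K. fd l (Tprime_coeff s A1 Xi K) P)" for l
    unfolding fd_Tprime_coeff[OF P A1 Xi] fd_that[OF P A1]
    by (intro antisym_idx_cmult antisym_idx_sum antisym_idx_add antisym_idx_multc antisym_idx_alt
        antisym_idx_that)
  have coeff: "of_nat (Suc s) * (\<Sum>l\<in>UNIV. fd l (Tprime_coeff s A1 Xi (I @ [l])) P)
      = (\<Sum>\<sigma>\<in>UNIV. (\<Sum>l\<in>UNIV. fd l (that A1 (I @ [l]) \<sigma>) P) * Xi0 Xi \<sigma> P)
        + (\<Sum>\<sigma>\<in>UNIV. \<Sum>l\<in>UNIV. that A1 (I @ [l]) \<sigma> P * Xi1 Xi \<sigma> l P)" for I
  proof -
    have "of_nat (Suc s) * (\<Sum>l\<in>UNIV. fd l (Tprime_coeff s A1 Xi (I @ [l])) P)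
        = (\<Sum>l\<in>UNIV. \<Sum>\<sigma>\<in>UNIV. fd l (that A1 (I @ [l]) \<sigma>) P * Xi0 Xi \<sigma> P
            + that A1 (I @ [l]) \<sigma> P * Xi1 Xi \<sigma> l P)"
      unfolding sum_distrib_left
      by (intro sum.cong refl) (simp add: fd_Tprime_coeff[OF P A1 Xi] add.commute[of 1])
    also have "\<dots> = (\<Sum>\<sigma>\<in>UNIV. \<Sum>l\<in>UNIV. fd l (that A1 (I @ [l]) \<sigma>) P * Xi0 Xi \<sigma> P
            + that A1 (I @ [l]) \<sigma> P * Xi1 Xi \<sigma> l P)"
      by (rule sum.swap)
    finally show ?thesis
      by (simp add: sum.distrib sum_distrib_right)
  qed
  show ?thesis
    unfolding Div_eq_sum_ds_idx[OF anti] coeff Vrho_def Eprime_def hform_def sum.distrib[symmetric]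
    by (intro sum.cong refl) (simp add: algebra_simps sum_subtractf sum.distrib)
qed

lemma reduced1_Eprime:
  "reduced1 S s (\<lambda>I j \<sigma> P. liftA (A1 I j \<sigma>) P - that A1 (I @ [j]) \<sigma> P)"
  unfolding reduced1_def
proof (intro allI ballI impI)
  fix I :: "'a list" and j \<sigma> P
  have "alt (\<lambda>ks. that A1 (butlast ks @ [last ks]) \<sigma> P) (I @ [j]) = alt (\<lambda>ks. that A1 ks \<sigma> P) (I @ [j])"
    by (rule alt_cong) (metis append_butlast_last_id length_0_conv snoc_eq_iff_butlast)
  also have "\<dots> = that A1 (I @ [j]) \<sigma> P"
    by (rule alt_eq_self_if_antisym_idx[OF antisym_idx_that refl])
  finally show "alt (\<lambda>ks. liftA (A1 (butlast ks) (last ks) \<sigma>) P - that A1 (butlast ks @ [last ks]) \<sigma> P) (I @ [j]) = 0"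
    by (simp add: alt_diff that_def)
qed

section \<open>Uniqueness of the splitting\<close>

lemma Ck_on_affine: "bounded_linear l \<Longrightarrow> Ck_on k S (\<lambda>x. l x + c)"
proof (induction k arbitrary: l c)
  case 0
  then show ?case
    by (simp add: continuous_on_add linear_continuous_on)
next
  case (Suc k)
  have d: "((\<lambda>x. l x + c) has_derivative l) (at x)" for x
    using bounded_linear.has_derivative[OF Suc.prems has_derivative_ident]
    by (auto intro!: derivative_eq_intros)
  then have "(\<lambda>x. frechet_derivative (\<lambda>x. l x + c) (at x) v) = (\<lambda>x. 0 + l v)" for v
    by (simp add: frechet_derivative_at[OF d, symmetric])
  moreover have "Ck_on k S (\<lambda>x. 0 + l v)" for v
    using Suc.IH[of "\<lambda>x. 0" "l v"] by simp
  ultimately show ?case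
    using d by (auto intro: differentiableI)
qed

text \<open>The field (x^j0 - x0^j0) d/dy^sigma0 vanishes over x0, while its prolongation there is
  the Kronecker delta in (sigma, j) at (sigma0, j0): it isolates a single coefficient.\<close>
definition test_field ::
    "real^'n::{finite,linorder} \<Rightarrow> 'm::finite \<Rightarrow> 'n::{finite,linorder} \<Rightarrow> (real^'n::{finite,linorder}) \<times> (real^'m::finite) \<Rightarrow> real^'m::finite" where
  "test_field x0 \<sigma>0 j0 = (\<lambda>z. \<chi> \<sigma>. if \<sigma> = \<sigma>0 then fst z $ j0 - x0 $ j0 else 0)"

lemma vert_field_test_field: "vert_field W (test_field x0 \<sigma>0 j0)"
  unfolding vert_field_def smooth_fun_on_def
proof (intro allI)
  fix \<sigma> k
  have "Ck_on k W (\<lambda>z. (if \<sigma> = \<sigma>0 then 1 else 0) * fst z $ j0 + (if \<sigma> = \<sigma>0 then - x0 $ j0 else 0))"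
    by (intro Ck_on_affine bounded_linear_const_mult bounded_linear_compose[OF bounded_linear_vec_nth bounded_linear_fst])
  then show "Ck_on k W (\<lambda>z. test_field x0 \<sigma>0 j0 z $ \<sigma>)"
    by (simp add: test_field_def if_distrib cong: if_cong)
qed

lemma Xi0_test_field: "Xi0 (test_field x0 \<sigma>0 j0) \<sigma> Q = (if \<sigma> = \<sigma>0 then fst Q $ j0 - x0 $ j0 else 0)"
  by (simp add: Xi0_def test_field_def)

lemma Xi0_test_field_at: "Xi0 (test_field (fst P) \<sigma>0 j0) \<sigma> P = 0"
  by (simp add: Xi0_test_field)

lemma Xi1_test_field: "Xi1 (test_field x0 \<sigma>0 j0) \<sigma> j P = (if \<sigma> = \<sigma>0 \<and> j = j0 then 1 else 0)"
proof -
  have "pdx j (Xi0 (test_field x0 \<sigma>0 j0) \<sigma>) P = (if \<sigma> = \<sigma>0 \<and> j = j0 then 1 else 0)"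
  proof (cases "\<sigma> = \<sigma>0 \<and> j = j0")
    case True
    then have "(\<lambda>t. Xi0 (test_field x0 \<sigma>0 j0) \<sigma> (upd_x j t P)) = (\<lambda>t. t - x0 $ j0)"
      by (simp add: Xi0_test_field upd_x_def fun_eq_iff)
    then show ?thesis
      using True by (simp add: pdx_def)
  next
    case False
    then have "(\<lambda>t. Xi0 (test_field x0 \<sigma>0 j0) \<sigma> (upd_x j t P)) = (\<lambda>t. Xi0 (test_field x0 \<sigma>0 j0) \<sigma> P)"
      by (auto simp: Xi0_test_field upd_x_def fun_eq_iff)
    then show ?thesis
      using False by (simp add: pdx_def)
  qed
  moreover have "pdy \<tau> J (Xi0 (test_field x0 \<sigma>0 j0) \<sigma>) P = 0" for \<tau> J
  proof -
    have fst_upd: "fst (upd_y \<tau> J t P) = fst P" for t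
      by (simp add: upd_y_def)
    show ?thesis
      by (simp add: pdy_def Xi0_test_field fst_upd cong: if_cong)
  qed
  ultimately show ?thesis
    unfolding Xi1_def fd_eq_sum_size_le[OF has_order_Xi0 order_refl] by simp
qed

lemma sum_sum_delta:
  fixes f :: "'a::finite \<Rightarrow> 'b::finite \<Rightarrow> real"
  shows "(\<Sum>\<sigma>\<in>UNIV. \<Sum>j\<in>UNIV. f \<sigma> j * (if \<sigma> = \<sigma>0 \<and> j = j0 then 1 else 0)) = f \<sigma>0 j0"
proof -
  have delta: "f \<sigma> j * (if \<sigma> = \<sigma>0 \<and> j = j0 then 1 else 0) = (if j = j0 then if \<sigma> = \<sigma>0 then f \<sigma> j else 0 else 0)" for \<sigma> j
    by simp
  show ?thesis
    by (simp add: delta sum.delta)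
qed

lemma Vrho_test_field:
  "Vrho s A0 A1 (test_field (fst P) \<sigma>0 j0) P js = (\<Sum>I | length I = s. liftA (A1 I j0 \<sigma>0) P * ds_idx I js)"
  unfolding Vrho_def hform_def Xi1_test_field sum_sum_delta Xi0_test_field_at by simp

lemma vm1_test_field:
  "vm1 s e0 e1 (test_field (fst P) \<sigma>0 j0) P js = (\<Sum>I | length I = s. (e1 I j0 \<sigma>0 P / fact s) * ds_idx I js)"
  unfolding vm1_def hform_def Xi1_test_field sum_sum_delta Xi0_test_field_at by simp

lemma fd_vm0_coeff_test_field:
  assumes P: "P \<in> jdom W" and fo: "\<And>K \<sigma>. finite_order (t K \<sigma>)" and pd: "\<And>K \<sigma>. pdiff_on {P} (t K \<sigma>)"
  shows "fd l (vm0_coeff (Suc s) t (test_field (fst P) \<sigma>0 j0) K) P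
    = (if l = j0 then t K \<sigma>0 P / fact (Suc s) else 0)"
proof -
  let ?Xi = "test_field (fst P) \<sigma>0 j0"
  have fo': "finite_order (\<lambda>Q. t K \<sigma> Q * Xi0 ?Xi \<sigma> Q)" for \<sigma>
    by (rule finite_order_comb[OF fo finite_order_Xi0])
  have pd': "pdiff_on {P} (\<lambda>Q. t K \<sigma> Q * Xi0 ?Xi \<sigma> Q)" for \<sigma>
    by (rule pdiff_on_mult[OF pd pdiff_on_Xi0[OF P vert_field_test_field]])
  have "fd l (vm0_coeff (Suc s) t ?Xi K) P = 1 / fact (Suc s) * fd l (\<lambda>Q. \<Sum>\<sigma>\<in>UNIV. t K \<sigma> Q * Xi0 ?Xi \<sigma> Q) P"
    unfolding vm0_coeff_def
    by (rule fd_cmult[OF finite_order_sum pdiff_on_sum]) (simp_all add: fo' pd')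
  also have "\<dots> = 1 / fact (Suc s) * (\<Sum>\<sigma>\<in>UNIV. fd l (\<lambda>Q. t K \<sigma> Q * Xi0 ?Xi \<sigma> Q) P)"
    by (simp only: fd_sum[OF finite_class.finite_UNIV fo' pd'])
  also have "\<dots> = 1 / fact (Suc s) * (\<Sum>\<sigma>\<in>UNIV. t K \<sigma> P * (if \<sigma> = \<sigma>0 \<and> l = j0 then 1 else 0))"
    unfolding fd_mult[OF fo finite_order_Xi0 pd pdiff_on_Xi0[OF P vert_field_test_field]]
    by (simp add: Xi0_test_field_at Xi1_test_field[unfolded Xi1_def])
  finally show ?thesis
    by (simp add: if_distrib[of "(*) _"] sum.delta cong: if_cong)
qed

lemma Div_vm0_coeff_test_field:
  assumes P: "P \<in> jdom W" and fo: "\<And>K \<sigma>. finite_order (t K \<sigma>)" and pd: "\<And>K \<sigma>. pdiff_on {P} (t K \<sigma>)"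
    and anti: "antisym_idx (Suc s) (\<lambda>K. t K \<sigma>0 P)"
  shows "Div (Suc s) (vm0_coeff (Suc s) t (test_field (fst P) \<sigma>0 j0)) P js
    = (\<Sum>I | length I = s. (t (I @ [j0]) \<sigma>0 P / fact s) * ds_idx I js)"
proof -
  have anti_fd: "antisym_idx (Suc s) (\<lambda>K. fd l (vm0_coeff (Suc s) t (test_field (fst P) \<sigma>0 j0) K) P)" for l
    unfolding fd_vm0_coeff_test_field[OF P fo pd]
    using antisym_idx_multc[OF anti] by (simp add: antisym_idx_def divide_inverse)
  show ?thesis
    unfolding Div_eq_sum_ds_idx[OF anti_fd] fd_vm0_coeff_test_field[OF P fo pd]
    by (intro sum.cong refl) (simp add: sum.delta fact_Suc del: of_nat_Suc)
qed

lemma A1_coeff_of_splitting: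
  fixes P :: "('n::{finite,linorder}, 'm::finite) jpt"
  assumes s: "s \<le> CARD('n)" and P: "P \<in> jdom W" and I: "length I = s"
    and A1_anti: "\<And>j \<sigma> z. z \<in> j1dom W \<Longrightarrow> antisym_idx s (\<lambda>I. A1 I j \<sigma> z)"
    and e1_anti: "antisym_idx s (\<lambda>I. e1 I j0 \<sigma>0 P)"
    and t_fo: "\<And>K \<sigma>. finite_order (t K \<sigma>)" and t_pd: "\<And>K \<sigma>. pdiff_on {P} (t K \<sigma>)"
    and t_anti: "antisym_idx (Suc s) (\<lambda>K. t K \<sigma>0 P)"
    and split: "\<And>js. Vrho s A0 A1 (test_field (fst P) \<sigma>0 j0) P js
      = vm1 s e0 e1 (test_field (fst P) \<sigma>0 j0) P js + Div (Suc s) (vm0_coeff (Suc s) t (test_field (fst P) \<sigma>0 j0)) P js"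
  shows "liftA (A1 I j0 \<sigma>0) P = (e1 I j0 \<sigma>0 P + t (I @ [j0]) \<sigma>0 P) / fact s"
proof -
  define f where "f I = liftA (A1 I j0 \<sigma>0) P - (e1 I j0 \<sigma>0 P + t (I @ [j0]) \<sigma>0 P) / fact s" for I
  have "antisym_idx s (\<lambda>I. liftA (A1 I j0 \<sigma>0) P)"
    unfolding liftA_def by (rule A1_anti[OF j1proj_in_j1dom[OF P]])
  then have "antisym_idx s f"
    unfolding f_def divide_inverse
    by (intro antisym_idx_diff antisym_idx_multc antisym_idx_add e1_anti antisym_idx_snoc t_anti)
  moreover have "(\<Sum>I | length I = s. f I * ds_idx I js) = 0" for js
    using split[of js]
    unfolding Vrho_test_field vm1_test_field Div_vm0_coeff_test_field[where t = t, OF P t_fo t_pd t_anti]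
    by (simp add: f_def algebra_simps sum_subtractf sum.distrib add_divide_distrib)
  ultimately have "f I = 0"
    by (rule ds_idx_linear_independent[OF _ s _ I])
  then show ?thesis
    by (simp add: f_def)
qed

text \<open>Antisymmetrizing the coefficient identity over all s + 1 indices removes e1, which is
  reduced, and reproduces t, which is already antisymmetric.\<close>
lemma splitting_t_eq_that:
  fixes P :: "('n::{finite,linorder}, 'm::finite) jpt"
  assumes s: "s \<le> CARD('n)" and P: "P \<in> jdom W" and K: "length K = Suc s"
    and A1_anti: "\<And>j \<sigma> z. z \<in> j1dom W \<Longrightarrow> antisym_idx s (\<lambda>I. A1 I j \<sigma> z)"
    and e1_anti: "\<And>j \<sigma>. antisym_idx s (\<lambda>I. e1 I j \<sigma> P)"
    and e1_reduced: "reduced1 (jdom W) s e1"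
    and t_fo: "\<And>K \<sigma>. finite_order (t K \<sigma>)" and t_pd: "\<And>K \<sigma>. pdiff_on {P} (t K \<sigma>)"
    and t_anti: "\<And>\<sigma>. antisym_idx (Suc s) (\<lambda>K. t K \<sigma> P)"
    and split: "\<And>\<sigma>0 j0 js. Vrho s A0 A1 (test_field (fst P) \<sigma>0 j0) P js
      = vm1 s e0 e1 (test_field (fst P) \<sigma>0 j0) P js + Div (Suc s) (vm0_coeff (Suc s) t (test_field (fst P) \<sigma>0 j0)) P js"
  shows "t K \<sigma> P = fact s * that A1 K \<sigma> P"
proof -
  have K_snoc: "butlast L @ [last L] = L" if "length L = length K" for L :: "'n list"
    using that K by (metis append_butlast_last_id length_0_conv nat.distinct(1))
  have "that A1 K \<sigma> P = alt (\<lambda>L. 1 / fact s * (e1 (butlast L) (last L) \<sigma> P + t L \<sigma> P)) K"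
    unfolding that_def
  proof (rule alt_cong)
    fix L :: "'n list" assume L: "length L = length K"
    have "liftA (A1 (butlast L) (last L) \<sigma>) P = (e1 (butlast L) (last L) \<sigma> P + t (butlast L @ [last L]) \<sigma> P) / fact s"
      by (rule A1_coeff_of_splitting[where t = t, OF s P _ A1_anti e1_anti t_fo t_pd t_anti split])
        (simp add: L K)
    then show "liftA (A1 (butlast L) (last L) \<sigma>) P = 1 / fact s * (e1 (butlast L) (last L) \<sigma> P + t L \<sigma> P)"
      by (simp add: K_snoc[OF L])
  qed
  also have "\<dots> = 1 / fact s * (alt (\<lambda>L. e1 (butlast L) (last L) \<sigma> P) K + alt (\<lambda>L. t L \<sigma> P) K)"
    by (simp only: alt_cmult alt_add)
  also have "alt (\<lambda>L. e1 (butlast L) (last L) \<sigma> P) K = 0"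
  proof -
    have "length (butlast K) = s"
      using K by simp
    then have "alt (\<lambda>L. e1 (butlast L) (last L) \<sigma> P) (butlast K @ [last K]) = 0"
      using e1_reduced P unfolding reduced1_def by blast
    then show ?thesis
      by (simp only: K_snoc[OF refl])
  qed
  also have "alt (\<lambda>L. t L \<sigma> P) K = t K \<sigma> P"
    by (rule alt_eq_self_if_antisym_idx[OF t_anti K])
  finally show ?thesis
    by simp
qed

lemma vm0_coeff_eq_Tprime_coeff:
  assumes "\<And>\<sigma>. t K \<sigma> Q = fact s * that A1 K \<sigma> Q"
  shows "vm0_coeff (Suc s) t Xi K Q = Tprime_coeff s A1 Xi K Q"
proof -
  have "fact s / fact (Suc s) = (1 / (of_nat s + 1) :: real)"
    by (simp add: fact_Suc divide_simps del: of_nat_Suc)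
  then show ?thesis
    using assms by (simp add: vm0_coeff_def Tprime_coeff_def sum_distrib_left mult.assoc add.commute)
qed

lemma splitting_unique:
  fixes W :: "((real^'n::{finite,linorder}) \<times> (real^'m::finite)) set"
  assumes W: "open W" and s: "s \<le> CARD('n)"
    and A1_smooth: "\<And>I j \<sigma>. smooth_fun_on (j1dom W) (A1 I j \<sigma>)"
    and A1_anti: "\<And>j \<sigma> z. z \<in> j1dom W \<Longrightarrow> antisym_idx s (\<lambda>I. A1 I j \<sigma> z)"
    and e1_anti: "\<And>j \<sigma> P. P \<in> jdom W \<Longrightarrow> antisym_idx s (\<lambda>I. e1 I j \<sigma> P)"
    and e1_reduced: "reduced1 (jdom W) s e1"
    and t_fo: "\<And>K \<sigma>. finite_order (t K \<sigma>)" and t_pd: "\<And>K \<sigma>. pdiff_on (jdom W) (t K \<sigma>)"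
    and t_anti: "\<And>\<sigma> P. P \<in> jdom W \<Longrightarrow> antisym_idx (Suc s) (\<lambda>K. t K \<sigma> P)"
    and split: "\<And>Xi P js. vert_field W Xi \<Longrightarrow> P \<in> jdom W \<Longrightarrow>
      Vrho s A0 A1 Xi P js = vm1 s e0 e1 Xi P js + Div (Suc s) (vm0_coeff (Suc s) t Xi) P js"
    and Xi: "vert_field W Xi" and P: "P \<in> jdom W"
  shows "vm1 s e0 e1 Xi P = Eprime s A0 A1 Xi P \<and> vm0 (Suc s) t Xi P = Tprime s A1 Xi P"
proof -
  have pd: "pdiff_on {Q} (t K \<sigma>)" if "Q \<in> jdom W" for Q K \<sigma>
    using t_pd that by (simp add: pdiff_on_def)
  have coeff: "vm0_coeff (Suc s) t Xi K Q = Tprime_coeff s A1 Xi K Q" if Q: "Q \<in> jdom W" "length K = Suc s" for K Q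
    by (rule vm0_coeff_eq_Tprime_coeff, rule splitting_t_eq_that[OF s Q(1,2) A1_anti e1_anti[OF Q(1)]
        e1_reduced t_fo pd[OF Q(1)] t_anti[OF Q(1)] split[OF vert_field_test_field Q(1)]])
  have "finite_order (vm0_coeff (Suc s) t Xi K)" "finite_order (Tprime_coeff s A1 Xi K)" for K
    unfolding vm0_coeff_def Tprime_coeff_def
    by (rule finite_order_comb[OF finite_order_const finite_order_sum[OF finite_class.finite_UNIV
          finite_order_comb[OF _ finite_order_Xi0]]], simp add: t_fo finite_order_that)+
  then have "fd l (vm0_coeff (Suc s) t Xi K) P = fd l (Tprime_coeff s A1 Xi K) P" if "length K = Suc s" for l K
    using coeff that by (intro fd_local[OF W P]) auto
  then have "Div (Suc s) (vm0_coeff (Suc s) t Xi) P js = Div (Suc s) (Tprime_coeff s A1 Xi) P js" for js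
    unfolding Div_def by (intro sum.cong refl) simp
  then have "vm1 s e0 e1 Xi P js = Eprime s A0 A1 Xi P js" for js
    using split[OF Xi P, of js] Vrho_eq_Eprime_plus_Div_Tprime[of P W A1 Xi s A0 js, OF P A1_smooth Xi] by simp
  moreover have "vm0 (Suc s) t Xi P = Tprime s A1 Xi P"
    unfolding vm0_def Tprime_def hform_def using coeff[OF P] by (intro ext sum.cong refl) simp
  ultimately show ?thesis
    by blast
qed

theorem proposition4p3:
  fixes W :: "((real^'n::{finite,linorder}) \<times> (real^'m::finite)) set"
    and s :: nat
    and A0 :: "'n::{finite,linorder} list \<Rightarrow> 'm::finite \<Rightarrow> (real^'n::{finite,linorder}) \<times> (real^'m) \<times> (real^'n::{finite,linorder}^'m) \<Rightarrow> real"
    and A1 :: "'n::{finite,linorder} list \<Rightarrow> 'n::{finite,linorder} \<Rightarrow> 'm::finite \<Rightarrow> (real^'n::{finite,linorder}) \<times> (real^'m) \<times> (real^'n::{finite,linorder}^'m) \<Rightarrow> real"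
  assumes W_open: "open W"
    and s_lt: "s < CARD('n::{finite,linorder})"
    and A0_smooth: "\<And>I \<sigma>. smooth_fun_on (j1dom W) (A0 I \<sigma>)"
    and A1_smooth: "\<And>I j \<sigma>. smooth_fun_on (j1dom W) (A1 I j \<sigma>)"
    and A0_antisym: "\<And>\<sigma> z. z \<in> j1dom W \<Longrightarrow> antisym_idx s (\<lambda>I. A0 I \<sigma> z)"
    and A1_antisym: "\<And>j \<sigma> z. z \<in> j1dom W \<Longrightarrow> antisym_idx s (\<lambda>I. A1 I j \<sigma> z)"
  shows
    "(\<forall>Xi. vert_field W Xi \<longrightarrow> (\<forall>P\<in>jdom W.
         Vrho s A0 A1 Xi P = (\<lambda>js. Eprime s A0 A1 Xi P js + Div (Suc s) (Tprime_coeff s A1 Xi) P js)))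
     \<and> reduced1 (jdom W) s (\<lambda>I j \<sigma> P. liftA (A1 I j \<sigma>) P - that A1 (I @ [j]) \<sigma> P)
     \<and> (\<forall>(e0 :: 'n::{finite,linorder} list \<Rightarrow> 'm::finite \<Rightarrow> ('n,'m) jpt \<Rightarrow> real)
          (e1 :: 'n::{finite,linorder} list \<Rightarrow> 'n::{finite,linorder} \<Rightarrow> 'm::finite \<Rightarrow> ('n,'m) jpt \<Rightarrow> real)
          (t :: 'n::{finite,linorder} list \<Rightarrow> 'm::finite \<Rightarrow> ('n,'m) jpt \<Rightarrow> real).
          (\<forall>I \<sigma>. \<exists>k. has_order k (e0 I \<sigma>)) \<and>
          (\<forall>I j \<sigma>. \<exists>k. has_order k (e1 I j \<sigma>)) \<and>
          (\<forall>\<sigma>. \<forall>P\<in>jdom W. antisym_idx s (\<lambda>I. e0 I \<sigma> P)) \<and>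
          (\<forall>j \<sigma>. \<forall>P\<in>jdom W. antisym_idx s (\<lambda>I. e1 I j \<sigma> P)) \<and>
          reduced1 (jdom W) s e1 \<and>
          (\<forall>K \<sigma>. \<exists>k. has_order k (t K \<sigma>)) \<and>
          (\<forall>K \<sigma>. pdiff_on (jdom W) (t K \<sigma>)) \<and>
          (\<forall>\<sigma>. \<forall>P\<in>jdom W. antisym_idx (Suc s) (\<lambda>K. t K \<sigma> P)) \<and>
          (\<forall>Xi. vert_field W Xi \<longrightarrow> (\<forall>P\<in>jdom W.
              Vrho s A0 A1 Xi P =
                (\<lambda>js. vm1 s e0 e1 Xi P js + Div (Suc s) (vm0_coeff (Suc s) t Xi) P js)))
        \<longrightarrow> (\<forall>Xi. vert_field W Xi \<longrightarrow> (\<forall>P\<in>jdom W.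
              vm1 s e0 e1 Xi P = Eprime s A0 A1 Xi P \<and>
              vm0 (Suc s) t Xi P = Tprime s A1 Xi P)))"
  using s_lt
proof (intro conjI)
  show "\<forall>Xi. vert_field W Xi \<longrightarrow> (\<forall>P\<in>jdom W.
      Vrho s A0 A1 Xi P = (\<lambda>js. Eprime s A0 A1 Xi P js + Div (Suc s) (Tprime_coeff s A1 Xi) P js))"
    by (intro allI impI ballI ext, rule Vrho_eq_Eprime_plus_Div_Tprime[OF _ A1_smooth])
  show "reduced1 (jdom W) s (\<lambda>I j \<sigma> P. liftA (A1 I j \<sigma>) P - that A1 (I @ [j]) \<sigma> P)"
    by (rule reduced1_Eprime)
qed (intro allI impI ballI, elim conjE, rule splitting_unique[OF W_open _ A1_smooth A1_antisym],
    auto simp: finite_order_def)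

end
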